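(* Let $\Sigma$ be a fixed finite alphabet and $\phi$ an antimorphic involution on $\Sigma^*$. Deciding whether a given word $w\in\Sigma^*$ contains a pseudo cube (with respect to $\phi$) as a factor can be done in time $O(|w|^2)$.
   Context: A function $\phi:\Sigma^*\to\Sigma^*$ is an antimorphic involution if $\phi(uv)=\phi(v)\phi(u)$ and $\phi(\phi(w))=w$ for all words $u,v,w$. A pseudo cube with respect to $\phi$ is a nonempty word $u_1u_2u_3$ such that for all $1\le i,j\le 3$, either $u_i=u_j$ or $u_i=\phi(u_j)$. A factor is a contiguous subword. *)

theory Defs
  imports Main
begin

definition antimorphic_involution :: "('a list \<Rightarrow> 'a list) \<Rightarrow> bool" where
  "antimorphic_involution \<phi> \<longleftrightarrow>
     (\<forall>u v. \<phi> (u @ v) = \<phi> v @ \<phi> u) \<and> (\<forall>w. \<phi> (\<phi> w) = w)"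

definition pseudo_cube :: "('a list \<Rightarrow> 'a list) \<Rightarrow> 'a list \<Rightarrow> bool" where
  "pseudo_cube \<phi> x \<longleftrightarrow> x \<noteq> [] \<and>
     (\<exists>u :: nat \<Rightarrow> 'a list. x = u 1 @ u 2 @ u 3 \<and>
        (\<forall>i\<in>{1,2,3}. \<forall>j\<in>{1,2,3}. u i = u j \<or> u i = \<phi> (u j)))"

definition is_factor :: "'a list \<Rightarrow> 'a list \<Rightarrow> bool" where
  "is_factor x w \<longleftrightarrow> (\<exists>p s. w = p @ x @ s)"

definition contains_pseudo_cube :: "('a list \<Rightarrow> 'a list) \<Rightarrow> 'a list \<Rightarrow> bool" where
  "contains_pseudo_cube \<phi> w \<longleftrightarrow> (\<exists>x. is_factor x w \<and> pseudo_cube \<phi> x)"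

text \<open>Memory is a single array of natural-number cells (registers = memory cells),
  addressed by naturals; every instruction costs one step.\<close>

datatype instr =
    Const nat nat
  | Add nat nat nat
  | Sub nat nat nat          (* mem[r] := mem[a] - mem[b]  (truncated) *)
  | Load nat nat
  | Store nat nat
  | Jz nat nat
  | Jmp nat
  | Halt

type_synonym config = "nat \<times> (nat \<Rightarrow> nat)"

definition halted :: "instr list \<Rightarrow> config \<Rightarrow> bool" where
  "halted P cf \<longleftrightarrow> fst cf \<ge> length P \<or> P ! fst cf = Halt"

fun exec_instr :: "instr \<Rightarrow> config \<Rightarrow> config" where
  "exec_instr (Const r c) (pc, m) = (Suc pc, m(r := c))"
| "exec_instr (Add r a b) (pc, m) = (Suc pc, m(r := m a + m b))"
| "exec_instr (Sub r a b) (pc, m) = (Suc pc, m(r := m a - m b))"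
| "exec_instr (Load r a) (pc, m) = (Suc pc, m(r := m (m a)))"
| "exec_instr (Store a b) (pc, m) = (Suc pc, m(m a := m b))"
| "exec_instr (Jz r l) (pc, m) = (if m r = 0 then l else Suc pc, m)"
| "exec_instr (Jmp l) (pc, m) = (l, m)"
| "exec_instr Halt (pc, m) = (pc, m)"

definition step :: "instr list \<Rightarrow> config \<Rightarrow> config" where
  "step P cf = (if halted P cf then cf else exec_instr (P ! fst cf) cf)"

definition run :: "instr list \<Rightarrow> nat \<Rightarrow> config \<Rightarrow> config" where
  "run P k cf = (step P ^^ k) cf"

definition init_mem :: "('a \<Rightarrow> nat) \<Rightarrow> 'a list \<Rightarrow> nat \<Rightarrow> nat" where
  "init_mem e w i = (if i = 0 then length w
                     else if i \<le> length w then e (w ! (i - 1)) else 0)"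

definition decides_in_time ::
  "instr list \<Rightarrow> ('a \<Rightarrow> nat) \<Rightarrow> ('a list \<Rightarrow> bool) \<Rightarrow> (nat \<Rightarrow> nat) \<Rightarrow> bool" where
  "decides_in_time P e L T \<longleftrightarrow>
     (\<forall>w. \<exists>k \<le> T (length w).
        halted P (run P k (0, init_mem e w)) \<and>
        snd (run P k (0, init_mem e w)) 0 = (if L w then 1 else 0))"

end

theory Submission
  imports Defs
begin

text \<open>An antimorphic involution acts as \<open>w \<mapsto> rev (map f w)\<close> for an involution \<open>f\<close> of the
  alphabet, so \<open>x \<sim> y \<longleftrightarrow> x = y \<or> x = \<phi> y\<close> is an equivalence, and three consecutive blocks
  \<open>u\<^sub>1u\<^sub>2u\<^sub>3\<close> of length \<open>m \<ge> 1\<close> form a pseudo cube iff \<open>u\<^sub>1 \<sim> u\<^sub>2\<close> and \<open>u\<^sub>2 \<sim> u\<^sub>3\<close>.  For two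
  adjacent blocks \<open>u v\<close>, \<open>u = v\<close> holds iff the run of positions \<open>i\<close> with \<open>w\<^sub>i = w\<^sub>i\<^sub>+\<^sub>m\<close> starting
  at \<open>u\<close> has length at least \<open>m\<close>, and \<open>u = \<phi> v\<close> iff the maximal \<open>\<phi>\<close>-palindrome centred
  between them has radius at least \<open>m\<close>.  The \<open>n + 1\<close> radii cost \<open>O(n\<^sup>2)\<close> together; for each
  of the at most \<open>n/3\<close> periods \<open>m\<close> the runs are computed backwards in \<open>O(n)\<close>, after which
  every start \<open>p\<close> is tested in constant time.\<close>

section \<open>Antimorphic involutions\<close>

lemma antimorphic_involution_Nil:
  assumes "antimorphic_involution \<phi>"
  shows "\<phi> [] = []"
proof -
  have "\<phi> ([] @ []) = \<phi> [] @ \<phi> []"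
    using assms unfolding antimorphic_involution_def by blast
  then have "length (\<phi> []) = length (\<phi> []) + length (\<phi> [])"
    by (metis append_Nil length_append)
  then show ?thesis by simp
qed

lemma antimorphic_involution_length_ge:
  assumes "antimorphic_involution \<phi>"
  shows "length v \<le> length (\<phi> v)"
proof (induction v)
  case (Cons a v)
  have "\<phi> ([a] @ v) = \<phi> v @ \<phi> [a]"
    using assms unfolding antimorphic_involution_def by blast
  moreover have "\<phi> [a] \<noteq> []"
    using assms antimorphic_involution_Nil[OF assms]
    unfolding antimorphic_involution_def by (metis list.distinct(1))
  ultimately show ?case using Cons by (cases "\<phi> [a]") auto
qed simp

lemma antimorphic_involution_singleton:
  assumes "antimorphic_involution \<phi>"
  shows "\<phi> [a] = [hd (\<phi> [a])]"
proof -
  have inv: "\<phi> (\<phi> [a]) = [a]"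
    using assms unfolding antimorphic_involution_def by blast
  then have "length (\<phi> [a]) \<le> 1"
    using antimorphic_involution_length_ge[OF assms, of "\<phi> [a]"] by simp
  moreover have "\<phi> [a] \<noteq> []"
    using inv antimorphic_involution_Nil[OF assms] by auto
  ultimately show ?thesis by (cases "\<phi> [a]") auto
qed

lemma antimorphic_involution_letterwise:
  assumes "antimorphic_involution \<phi>"
  obtains f where "\<And>a. f (f a) = a" and "\<phi> = (\<lambda>w. rev (map f w))"
proof
  let ?f = "\<lambda>a. hd (\<phi> [a])"
  show "?f (?f a) = a" for a
    using assms antimorphic_involution_singleton[OF assms, of a]
    unfolding antimorphic_involution_def by (metis list.sel(1))
  show "\<phi> = (\<lambda>w. rev (map ?f w))"
  proof
    fix w show "\<phi> w = rev (map ?f w)"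
    proof (induction w)
      case (Cons a v)
      have "\<phi> ([a] @ v) = \<phi> v @ \<phi> [a]"
        using assms unfolding antimorphic_involution_def by blast
      then show ?case
        using Cons antimorphic_involution_singleton[OF assms, of a] by simp
    qed (simp add: antimorphic_involution_Nil[OF assms])
  qed
qed

section \<open>Pseudo cubes via runs and mirror radii\<close>

definition related :: "('a \<Rightarrow> 'a) \<Rightarrow> 'a list \<Rightarrow> 'a list \<Rightarrow> bool" where
  "related f x y \<longleftrightarrow> x = y \<or> x = rev (map f y)"

lemma related_refl: "related f x x"
  unfolding related_def by simp

lemma related_sym: "(\<And>a. f (f a) = a) \<Longrightarrow> related f x y \<Longrightarrow> related f y x"
  unfolding related_def by (auto simp: rev_map comp_def)

lemma related_trans:
  "(\<And>a. f (f a) = a) \<Longrightarrow> related f x y \<Longrightarrow> related f y z \<Longrightarrow> related f x z"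
  unfolding related_def by (auto simp: rev_map comp_def)

definition block :: "'a list \<Rightarrow> nat \<Rightarrow> nat \<Rightarrow> nat \<Rightarrow> 'a list" where
  "block w p m j = take m (drop (p + j * m) w)"

lemma take_three_blocks:
  "take (3 * m) (drop p w) = block w p m 0 @ block w p m 1 @ block w p m 2"
proof -
  have three: "3 * m = m + (m + m)" by simp
  show ?thesis
    unfolding three take_add block_def
    by (simp add: add.assoc mult_2 add.commute add.left_commute)
qed

lemma contains_pseudo_cube_iff_blocks:
  assumes invol: "\<And>a. f (f a) = a"
  shows "contains_pseudo_cube (\<lambda>w. rev (map f w)) w \<longleftrightarrow>
    (\<exists>p m. 1 \<le> m \<and> p + 3 * m \<le> length w \<and>
       related f (block w p m 0) (block w p m 1) \<and> related f (block w p m 1) (block w p m 2))"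
    (is "?lhs \<longleftrightarrow> ?rhs")
proof
  assume ?lhs
  then obtain x pre suf where w: "w = pre @ x @ suf"
    and "pseudo_cube (\<lambda>w. rev (map f w)) x"
    unfolding contains_pseudo_cube_def is_factor_def by blast
  then obtain u :: "nat \<Rightarrow> 'a list" where x: "x \<noteq> []" "x = u 1 @ u 2 @ u 3"
    and r: "\<And>i j. i \<in> {1,2,3} \<Longrightarrow> j \<in> {1,2,3} \<Longrightarrow> related f (u i) (u j)"
    unfolding pseudo_cube_def related_def by blast
  define m where "m = length (u 1)"
  have len: "length (u 2) = m" "length (u 3) = m"
    using r[of 2 1] r[of 3 1] unfolding m_def related_def by auto
  define p where "p = length pre"
  have "block w p m 0 = u 1" "block w p m 1 = u 2" "block w p m 2 = u 3"
    unfolding block_def w p_def x(2) using m_def len by (simp_all add: mult_2)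
  moreover have "1 \<le> m"
    using x len unfolding m_def by (cases "u 1") auto
  moreover have "p + 3 * m \<le> length w"
    using len unfolding m_def w p_def x(2) by simp
  ultimately show ?rhs
    using r[of 1 2] r[of 2 3] by (intro exI[of _ p] exI[of _ m]) simp
next
  assume ?rhs
  then obtain p m where m: "1 \<le> m" "p + 3 * m \<le> length w"
    and r01: "related f (block w p m 0) (block w p m 1)"
    and r12: "related f (block w p m 1) (block w p m 2)"
    by blast
  define u where "u i = block w p m (i - 1)" for i :: nat
  have "related f (u i) (u j)" if "i \<in> {1,2,3}" "j \<in> {1,2,3}" for i j
    using that r01 r12 related_trans[OF invol r01 r12] related_sym[OF invol] related_refl
    unfolding u_def by (fastforce simp: numeral_2_eq_2)
  moreover have "take (3 * m) (drop p w) = u 1 @ u 2 @ u 3"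
    unfolding take_three_blocks u_def by (simp add: numeral_2_eq_2)
  moreover have "take (3 * m) (drop p w) \<noteq> []"
    using m by simp
  ultimately have "pseudo_cube (\<lambda>w. rev (map f w)) (take (3 * m) (drop p w))"
    unfolding pseudo_cube_def related_def by blast
  moreover have "w = take p w @ take (3 * m) (drop p w) @ drop (3 * m) (drop p w)"
    by (metis append_take_drop_id)
  ultimately show ?lhs
    unfolding contains_pseudo_cube_def is_factor_def by blast
qed

text \<open>Both fail beyond the end of the word, so maximal
  matching prefixes always exist.\<close>

definition shift_match :: "'a list \<Rightarrow> nat \<Rightarrow> nat \<Rightarrow> nat \<Rightarrow> bool" where
  "shift_match w m i s \<longleftrightarrow> i + s + m < length w \<and> w ! (i + s) = w ! (i + s + m)"

definition mirror_match :: "('a \<Rightarrow> 'a) \<Rightarrow> 'a list \<Rightarrow> nat \<Rightarrow> nat \<Rightarrow> bool" where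
  "mirror_match f w c s \<longleftrightarrow> s < c \<and> c + s < length w \<and> w ! (c - 1 - s) = f (w ! (c + s))"

definition cube_at :: "('a \<Rightarrow> 'a) \<Rightarrow> 'a list \<Rightarrow> nat \<Rightarrow> nat \<Rightarrow> bool" where
  "cube_at f w p m \<longleftrightarrow>
     ((\<forall>s<m. shift_match w m p s) \<or> (\<forall>s<m. mirror_match f w (p + m) s)) \<and>
     ((\<forall>s<m. shift_match w m (p + m) s) \<or> (\<forall>s<m. mirror_match f w (p + 2 * m) s))"

lemma block_eq_iff_shift_match:
  assumes "p + 2 * m \<le> length w"
  shows "block w p m 0 = block w p m 1 \<longleftrightarrow> (\<forall>s<m. shift_match w m p s)"
  using assms unfolding block_def shift_match_def
  by (auto simp: list_eq_iff_nth_eq add.commute add.left_commute)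

lemma block_eq_rev_map_iff_mirror_match:
  assumes "p + 2 * m \<le> length w"
  shows "block w p m 0 = rev (map f (block w p m 1)) \<longleftrightarrow> (\<forall>s<m. mirror_match f w (p + m) s)"
proof -
  have "block w p m 0 = rev (map f (block w p m 1)) \<longleftrightarrow>
      (\<forall>i<m. w ! (p + i) = f (w ! (p + m + (m - 1 - i))))"
    using assms unfolding block_def
    by (auto simp: list_eq_iff_nth_eq rev_nth add.commute add.left_commute)
  also have "\<dots> \<longleftrightarrow> (\<forall>s<m. w ! (p + m - 1 - s) = f (w ! (p + m + s)))"
  proof (intro iffI allI impI)
    fix s assume all: "\<forall>i<m. w ! (p + i) = f (w ! (p + m + (m - 1 - i)))" and "s < m"
    then show "w ! (p + m - 1 - s) = f (w ! (p + m + s))"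
      using all[rule_format, of "m - 1 - s"] by (simp add: Suc_diff_Suc)
  next
    fix i assume all: "\<forall>s<m. w ! (p + m - 1 - s) = f (w ! (p + m + s))" and "i < m"
    then show "w ! (p + i) = f (w ! (p + m + (m - 1 - i)))"
      using all[rule_format, of "m - 1 - i"] by (simp add: Suc_diff_Suc)
  qed
  finally show ?thesis
    using assms unfolding mirror_match_def by auto
qed

lemma cube_at_iff_related:
  assumes "p + 3 * m \<le> length w"
  shows "cube_at f w p m \<longleftrightarrow>
    related f (block w p m 0) (block w p m 1) \<and> related f (block w p m 1) (block w p m 2)"
proof -
  have shift: "block w p m 1 = block w (p + m) m 0" "block w p m 2 = block w (p + m) m 1"
    unfolding block_def by (simp_all add: mult_2 add.assoc)
  show ?thesis
    unfolding cube_at_def related_def shift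
    using assms block_eq_iff_shift_match[of p m w] block_eq_iff_shift_match[of "p + m" m w]
      block_eq_rev_map_iff_mirror_match[of p m w f]
      block_eq_rev_map_iff_mirror_match[of "p + m" m w f]
    by (simp add: shift[symmetric] mult_2 add.assoc)
qed

lemma contains_pseudo_cube_iff_cube_at:
  assumes "\<And>a. f (f a) = a"
  shows "contains_pseudo_cube (\<lambda>w. rev (map f w)) w \<longleftrightarrow>
    (\<exists>p m. 1 \<le> m \<and> p + 3 * m \<le> length w \<and> cube_at f w p m)"
  unfolding contains_pseudo_cube_iff_blocks[OF assms] using cube_at_iff_related by blast

definition max_prefix :: "(nat \<Rightarrow> bool) \<Rightarrow> nat \<Rightarrow> bool" where
  "max_prefix P k \<longleftrightarrow> (\<forall>s<k. P s) \<and> \<not> P k"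

lemma max_prefix_le_iff: "max_prefix P k \<Longrightarrow> m \<le> k \<longleftrightarrow> (\<forall>s<m. P s)"
  unfolding max_prefix_def by (meson leI order_less_le_trans)

lemma max_prefix_0: "\<not> P 0 \<Longrightarrow> max_prefix P 0"
  unfolding max_prefix_def by simp

lemma max_prefix_Suc: "P 0 \<Longrightarrow> max_prefix (\<lambda>s. P (Suc s)) k \<Longrightarrow> max_prefix P (Suc k)"
  unfolding max_prefix_def by (auto simp: less_Suc_eq_0_disj)

section \<open>Counting machine steps\<close>

definition reaches_within :: "instr list \<Rightarrow> config \<Rightarrow> nat \<Rightarrow> (config \<Rightarrow> bool) \<Rightarrow> bool" where
  "reaches_within P s t Q \<longleftrightarrow> (\<exists>k\<le>t. Q (run P k s))"

lemma run_0 [simp]: "run P 0 s = s"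
  by (simp add: run_def)

lemma run_Suc [simp]: "run P (Suc k) s = run P k (step P s)"
  by (simp add: run_def funpow_Suc_right del: funpow.simps)

lemma run_numeral [simp]: "run P (numeral k) s = run P (pred_numeral k) (step P s)"
  by (simp add: numeral_eq_Suc)

lemma run_add: "run P (a + b) s = run P b (run P a s)"
  unfolding run_def by (metis add.commute comp_apply funpow_add)

lemma reaches_within_run: "Q (run P k s) \<Longrightarrow> reaches_within P s k Q"
  unfolding reaches_within_def by blast

lemma reaches_within_refl: "Q s \<Longrightarrow> reaches_within P s t Q"
  unfolding reaches_within_def by (rule exI[of _ 0]) simp

lemma reaches_within_mono: "reaches_within P s t Q \<Longrightarrow> t \<le> t' \<Longrightarrow> reaches_within P s t' Q"
  unfolding reaches_within_def by (meson order_trans)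

lemma reaches_within_post:
  "reaches_within P s t Q \<Longrightarrow> (\<And>c. Q c \<Longrightarrow> Q' c) \<Longrightarrow> reaches_within P s t Q'"
  unfolding reaches_within_def by blast

lemma reaches_within_seq:
  assumes "reaches_within P s t1 R" and "\<And>s1. R s1 \<Longrightarrow> reaches_within P s1 t2 Q"
  shows "reaches_within P s (t1 + t2) Q"
proof -
  obtain k where k: "k \<le> t1" "R (run P k s)"
    using assms(1) unfolding reaches_within_def by blast
  moreover obtain k2 where "k2 \<le> t2" "Q (run P k2 (run P k s))"
    using assms(2)[OF k(2)] unfolding reaches_within_def by blast
  ultimately show ?thesis
    unfolding reaches_within_def by (intro exI[of _ "k + k2"]) (simp add: run_add)
qed

lemma reaches_within_loop:
  assumes step: "\<And>m. I m \<Longrightarrow>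
      reaches_within P (h, m) C (\<lambda>c. Q c \<or> (fst c = h \<and> I (snd c) \<and> (\<mu> (snd c) :: nat) < \<mu> m))"
  shows "I m \<Longrightarrow> reaches_within P (h, m) ((\<mu> m + 1) * C) Q"
proof (induction "\<mu> m" arbitrary: m rule: less_induct)
  case less
  have "reaches_within P (h, m) (C + \<mu> m * C) Q"
  proof (rule reaches_within_seq[OF step[OF less.prems]])
    fix c assume c: "Q c \<or> (fst c = h \<and> I (snd c) \<and> \<mu> (snd c) < \<mu> m)"
    show "reaches_within P c (\<mu> m * C) Q"
    proof (cases "Q c")
      case True
      then show ?thesis by (rule reaches_within_refl)
    next
      case False
      then obtain m1 where c: "c = (h, m1)" "I m1" "\<mu> m1 < \<mu> m"
        using c by (cases c) auto
      then have "reaches_within P (h, m1) ((\<mu> m1 + 1) * C) Q"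
        using less by blast
      then show ?thesis
        unfolding c(1)
        by (rule reaches_within_mono) (use c mult_le_mono1[of "\<mu> m1 + 1" "\<mu> m" C] in simp)
    qed
  qed
  then show ?case by (simp add: algebra_simps)
qed

lemma reaches_within_loop_bounded:
  assumes "fst c = h \<and> I (snd c)" and "\<mu> (snd c) \<le> N"
    and "\<And>m. I m \<Longrightarrow>
      reaches_within P (h, m) C (\<lambda>c. Q c \<or> (fst c = h \<and> I (snd c) \<and> (\<mu> (snd c) :: nat) < \<mu> m))"
  shows "reaches_within P c ((N + 1) * C) Q"
proof -
  obtain m where c: "c = (h, m)" "I m"
    using assms(1) by (cases c) auto
  have "reaches_within P c ((\<mu> m + 1) * C) Q"
    unfolding c(1) by (rule reaches_within_loop[OF assms(3) c(2)])
  then show ?thesis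
    by (rule reaches_within_mono) (use assms(2) c in simp)
qed

text \<open>Stepping a concrete program by simplification: \<open>next_pc\<close> keeps program counters as
  numerals, so that they match the indices of the instruction table below.\<close>

definition next_pc :: "nat \<Rightarrow> nat" where
  "next_pc pc = pc + 1"

lemma next_pc_simps [simp]:
  "next_pc 0 = 1" "next_pc (Suc 0) = 2" "next_pc (numeral k) = numeral (Num.inc k)"
  by (simp_all add: next_pc_def numeral_inc)

declare exec_instr.simps [simp del]

lemma exec_instr_next_pc [simp]:
  "exec_instr (Const r c) (pc, m) = (next_pc pc, m(r := c))"
  "exec_instr (Add r a b) (pc, m) = (next_pc pc, m(r := m a + m b))"
  "exec_instr (Sub r a b) (pc, m) = (next_pc pc, m(r := m a - m b))"
  "exec_instr (Load r a) (pc, m) = (next_pc pc, m(r := m (m a)))"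
  "exec_instr (Store a b) (pc, m) = (next_pc pc, m(m a := m b))"
  "exec_instr (Jz r l) (pc, m) = (if m r = 0 then l else next_pc pc, m)"
  "exec_instr (Jmp l) (pc, m) = (l, m)"
  by (simp_all add: next_pc_def exec_instr.simps)

section \<open>The decision program\<close>

text \<open>The alphabet-independent part of the decision program; the parameter bounds the letter
  codes.  Labels: 0--42 stash the first input cells and set up counters, 43 recomputes \<open>n\<close>,
  48 sets the base addresses and jumps to the table code at 167, which returns to 57; 58 copies
  \<open>w\<close> and \<open>map f w\<close>, 76 computes the mirror radii (inner loop at 80), 103 loops over the
  periods, computing the runs at 110 and scanning the starting positions at 133; 163 and 165
  write the answer and 166 halts.\<close>

definition main :: "nat \<Rightarrow> instr list" where
  "main max_code = [Jz 0 166,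
  Add 0 0 0,
  Add 0 0 0,
  Add 0 0 0,
  Add 0 0 0,
  Add 0 0 0,
  Store 0 1,
  Const 1 1,
  Add 0 0 1,
  Store 0 2,
  Add 0 0 1,
  Store 0 3,
  Add 0 0 1,
  Store 0 4,
  Add 0 0 1,
  Store 0 5,
  Add 0 0 1,
  Store 0 6,
  Add 0 0 1,
  Store 0 7,
  Add 0 0 1,
  Store 0 8,
  Add 0 0 1,
  Store 0 9,
  Add 0 0 1,
  Store 0 10,
  Add 0 0 1,
  Store 0 11,
  Add 0 0 1,
  Store 0 12,
  Add 0 0 1,
  Store 0 13,
  Add 0 0 1,
  Store 0 14,
  Add 0 0 1,
  Store 0 15,
  Add 0 0 1,
  Store 0 16,
  Const 12 15,
  Sub 3 0 12,
  Const 2 0,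
  Const 13 0,
  Const 14 32,
  Sub 12 3 13,
  Jz 12 48,
  Add 13 13 14,
  Add 2 2 1,
  Jmp 43,
  Const 12 16,
  Add 4 3 12,
  Const 12 (max_code+1),
  Add 5 4 12,
  Add 6 5 2,
  Add 7 6 2,
  Add 8 7 2,
  Add 8 8 1,
  Jmp 167,
  Const 9 0,
  Sub 12 2 9,
  Jz 12 75,
  Const 12 16,
  Sub 12 12 9,
  Jz 12 65,
  Add 13 3 9,
  Jmp 66,
  Add 13 9 1,
  Load 14 13,
  Add 15 5 9,
  Store 15 14,
  Add 13 4 14,
  Load 14 13,
  Add 15 6 9,
  Store 15 14,
  Add 9 9 1,
  Jmp 58,
  Const 9 0,
  Sub 12 9 2,
  Jz 12 79,
  Jmp 102,
  Const 10 0,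
  Sub 12 9 10,
  Jz 12 98,
  Add 13 9 10,
  Sub 12 2 13,
  Jz 12 98,
  Add 14 6 13,
  Load 14 14,
  Sub 13 9 10,
  Sub 13 13 1,
  Add 13 5 13,
  Load 13 13,
  Sub 15 13 14,
  Sub 16 14 13,
  Add 15 15 16,
  Jz 15 96,
  Jmp 98,
  Add 10 10 1,
  Jmp 80,
  Add 12 7 9,
  Store 12 10,
  Add 9 9 1,
  Jmp 76,
  Const 11 1,
  Add 12 11 11,
  Add 12 12 11,
  Sub 12 12 2,
  Jz 12 108,
  Jmp 165,
  Const 12 0,
  Add 9 2 12,
  Jz 9 132,
  Sub 9 9 1,
  Add 13 9 11,
  Sub 12 2 13,
  Jz 12 123,
  Add 14 5 13,
  Load 14 14,
  Add 15 5 9,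
  Load 15 15,
  Sub 16 14 15,
  Sub 12 15 14,
  Add 16 16 12,
  Jz 16 125,
  Const 14 0,
  Jmp 129,
  Add 15 8 9,
  Add 15 15 1,
  Load 14 15,
  Add 14 14 1,
  Add 15 8 9,
  Store 15 14,
  Jmp 110,
  Const 9 0,
  Add 12 11 11,
  Add 12 12 11,
  Add 12 12 9,
  Sub 12 12 2,
  Jz 12 139,
  Jmp 161,
  Add 13 8 9,
  Load 13 13,
  Sub 13 11 13,
  Jz 13 149,
  Add 13 9 11,
  Add 13 7 13,
  Load 13 13,
  Sub 13 11 13,
  Jz 13 149,
  Jmp 159,
  Add 13 9 11,
  Add 14 8 13,
  Load 14 14,
  Sub 14 11 14,
  Jz 14 163,
  Add 13 13 11,
  Add 13 7 13,
  Load 13 13,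
  Sub 13 11 13,
  Jz 13 163,
  Add 9 9 1,
  Jmp 133,
  Add 11 11 1,
  Jmp 103,
  Const 0 1,
  Jmp 166,
  Const 0 0,
  Halt]"

lemma length_main [simp]: "length (main max_code) = 167" by (simp add: main_def)

lemma main_nth [simp]:
  "main max_code ! 0 = Jz 0 166"
  "main max_code ! 1 = Add 0 0 0"
  "main max_code ! Suc 0 = Add 0 0 0"
  "main max_code ! 2 = Add 0 0 0"
  "main max_code ! 3 = Add 0 0 0"
  "main max_code ! 4 = Add 0 0 0"
  "main max_code ! 5 = Add 0 0 0"
  "main max_code ! 6 = Store 0 1"
  "main max_code ! 7 = Const 1 1"
  "main max_code ! 8 = Add 0 0 1"
  "main max_code ! 9 = Store 0 2"
  "main max_code ! 10 = Add 0 0 1"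
  "main max_code ! 11 = Store 0 3"
  "main max_code ! 12 = Add 0 0 1"
  "main max_code ! 13 = Store 0 4"
  "main max_code ! 14 = Add 0 0 1"
  "main max_code ! 15 = Store 0 5"
  "main max_code ! 16 = Add 0 0 1"
  "main max_code ! 17 = Store 0 6"
  "main max_code ! 18 = Add 0 0 1"
  "main max_code ! 19 = Store 0 7"
  "main max_code ! 20 = Add 0 0 1"
  "main max_code ! 21 = Store 0 8"
  "main max_code ! 22 = Add 0 0 1"
  "main max_code ! 23 = Store 0 9"
  "main max_code ! 24 = Add 0 0 1"
  "main max_code ! 25 = Store 0 10"
  "main max_code ! 26 = Add 0 0 1"
  "main max_code ! 27 = Store 0 11"
  "main max_code ! 28 = Add 0 0 1"
  "main max_code ! 29 = Store 0 12"
  "main max_code ! 30 = Add 0 0 1"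
  "main max_code ! 31 = Store 0 13"
  "main max_code ! 32 = Add 0 0 1"
  "main max_code ! 33 = Store 0 14"
  "main max_code ! 34 = Add 0 0 1"
  "main max_code ! 35 = Store 0 15"
  "main max_code ! 36 = Add 0 0 1"
  "main max_code ! 37 = Store 0 16"
  "main max_code ! 38 = Const 12 15"
  "main max_code ! 39 = Sub 3 0 12"
  "main max_code ! 40 = Const 2 0"
  "main max_code ! 41 = Const 13 0"
  "main max_code ! 42 = Const 14 32"
  "main max_code ! 43 = Sub 12 3 13"
  "main max_code ! 44 = Jz 12 48"
  "main max_code ! 45 = Add 13 13 14"
  "main max_code ! 46 = Add 2 2 1"
  "main max_code ! 47 = Jmp 43"
  "main max_code ! 48 = Const 12 16"
  "main max_code ! 49 = Add 4 3 12"
  "main max_code ! 50 = Const 12 (max_code+1)"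
  "main max_code ! 51 = Add 5 4 12"
  "main max_code ! 52 = Add 6 5 2"
  "main max_code ! 53 = Add 7 6 2"
  "main max_code ! 54 = Add 8 7 2"
  "main max_code ! 55 = Add 8 8 1"
  "main max_code ! 56 = Jmp 167"
  "main max_code ! 57 = Const 9 0"
  "main max_code ! 58 = Sub 12 2 9"
  "main max_code ! 59 = Jz 12 75"
  "main max_code ! 60 = Const 12 16"
  "main max_code ! 61 = Sub 12 12 9"
  "main max_code ! 62 = Jz 12 65"
  "main max_code ! 63 = Add 13 3 9"
  "main max_code ! 64 = Jmp 66"
  "main max_code ! 65 = Add 13 9 1"
  "main max_code ! 66 = Load 14 13"
  "main max_code ! 67 = Add 15 5 9"
  "main max_code ! 68 = Store 15 14"
  "main max_code ! 69 = Add 13 4 14"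
  "main max_code ! 70 = Load 14 13"
  "main max_code ! 71 = Add 15 6 9"
  "main max_code ! 72 = Store 15 14"
  "main max_code ! 73 = Add 9 9 1"
  "main max_code ! 74 = Jmp 58"
  "main max_code ! 75 = Const 9 0"
  "main max_code ! 76 = Sub 12 9 2"
  "main max_code ! 77 = Jz 12 79"
  "main max_code ! 78 = Jmp 102"
  "main max_code ! 79 = Const 10 0"
  "main max_code ! 80 = Sub 12 9 10"
  "main max_code ! 81 = Jz 12 98"
  "main max_code ! 82 = Add 13 9 10"
  "main max_code ! 83 = Sub 12 2 13"
  "main max_code ! 84 = Jz 12 98"
  "main max_code ! 85 = Add 14 6 13"
  "main max_code ! 86 = Load 14 14"
  "main max_code ! 87 = Sub 13 9 10"
  "main max_code ! 88 = Sub 13 13 1"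
  "main max_code ! 89 = Add 13 5 13"
  "main max_code ! 90 = Load 13 13"
  "main max_code ! 91 = Sub 15 13 14"
  "main max_code ! 92 = Sub 16 14 13"
  "main max_code ! 93 = Add 15 15 16"
  "main max_code ! 94 = Jz 15 96"
  "main max_code ! 95 = Jmp 98"
  "main max_code ! 96 = Add 10 10 1"
  "main max_code ! 97 = Jmp 80"
  "main max_code ! 98 = Add 12 7 9"
  "main max_code ! 99 = Store 12 10"
  "main max_code ! 100 = Add 9 9 1"
  "main max_code ! 101 = Jmp 76"
  "main max_code ! 102 = Const 11 1"
  "main max_code ! 103 = Add 12 11 11"
  "main max_code ! 104 = Add 12 12 11"
  "main max_code ! 105 = Sub 12 12 2"
  "main max_code ! 106 = Jz 12 108"
  "main max_code ! 107 = Jmp 165"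
  "main max_code ! 108 = Const 12 0"
  "main max_code ! 109 = Add 9 2 12"
  "main max_code ! 110 = Jz 9 132"
  "main max_code ! 111 = Sub 9 9 1"
  "main max_code ! 112 = Add 13 9 11"
  "main max_code ! 113 = Sub 12 2 13"
  "main max_code ! 114 = Jz 12 123"
  "main max_code ! 115 = Add 14 5 13"
  "main max_code ! 116 = Load 14 14"
  "main max_code ! 117 = Add 15 5 9"
  "main max_code ! 118 = Load 15 15"
  "main max_code ! 119 = Sub 16 14 15"
  "main max_code ! 120 = Sub 12 15 14"
  "main max_code ! 121 = Add 16 16 12"
  "main max_code ! 122 = Jz 16 125"
  "main max_code ! 123 = Const 14 0"
  "main max_code ! 124 = Jmp 129"
  "main max_code ! 125 = Add 15 8 9"
  "main max_code ! 126 = Add 15 15 1"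
  "main max_code ! 127 = Load 14 15"
  "main max_code ! 128 = Add 14 14 1"
  "main max_code ! 129 = Add 15 8 9"
  "main max_code ! 130 = Store 15 14"
  "main max_code ! 131 = Jmp 110"
  "main max_code ! 132 = Const 9 0"
  "main max_code ! 133 = Add 12 11 11"
  "main max_code ! 134 = Add 12 12 11"
  "main max_code ! 135 = Add 12 12 9"
  "main max_code ! 136 = Sub 12 12 2"
  "main max_code ! 137 = Jz 12 139"
  "main max_code ! 138 = Jmp 161"
  "main max_code ! 139 = Add 13 8 9"
  "main max_code ! 140 = Load 13 13"
  "main max_code ! 141 = Sub 13 11 13"
  "main max_code ! 142 = Jz 13 149"
  "main max_code ! 143 = Add 13 9 11"
  "main max_code ! 144 = Add 13 7 13"
  "main max_code ! 145 = Load 13 13"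
  "main max_code ! 146 = Sub 13 11 13"
  "main max_code ! 147 = Jz 13 149"
  "main max_code ! 148 = Jmp 159"
  "main max_code ! 149 = Add 13 9 11"
  "main max_code ! 150 = Add 14 8 13"
  "main max_code ! 151 = Load 14 14"
  "main max_code ! 152 = Sub 14 11 14"
  "main max_code ! 153 = Jz 14 163"
  "main max_code ! 154 = Add 13 13 11"
  "main max_code ! 155 = Add 13 7 13"
  "main max_code ! 156 = Load 13 13"
  "main max_code ! 157 = Sub 13 11 13"
  "main max_code ! 158 = Jz 13 163"
  "main max_code ! 159 = Add 9 9 1"
  "main max_code ! 160 = Jmp 133"
  "main max_code ! 161 = Add 11 11 1"
  "main max_code ! 162 = Jmp 103"
  "main max_code ! 163 = Const 0 1"
  "main max_code ! 164 = Jmp 166"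
  "main max_code ! 165 = Const 0 0"
  "main max_code ! 166 = Halt"
  by (simp_all add: main_def)

locale cube_machine =
  fixes e :: "'a \<Rightarrow> nat" and f :: "'a \<Rightarrow> 'a" and xs :: "'a list"
  assumes inj: "inj e" and fin: "set xs = UNIV" and invol: "\<And>a. f (f a) = a"
begin

definition max_code :: nat where
  "max_code = Max (e ` set xs)"

text \<open>The alphabet-dependent part of the program stores the letter involution as the table
  \<open>mem[table + e a] = e (f a)\<close>; register 4 holds the base address \<open>table\<close>.\<close>

definition table_entry_code :: "'a \<Rightarrow> instr list" where
  "table_entry_code a = [Const 12 (e a), Add 12 12 4, Const 13 (e (f a)), Store 12 13]"

definition table_code :: "instr list" where
  "table_code = concat (map table_entry_code xs)"

definition prog :: "instr list" where
  "prog = main max_code @ table_code @ [Jmp 57]"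

lemma code_le_max_code: "e a \<le> max_code"
proof -
  have "a \<in> set xs" using fin by auto
  then show ?thesis
    unfolding max_code_def by (rule Max_ge[OF finite_imageI[OF finite_set] imageI])
qed

lemma length_table_entry_code: "length (table_entry_code a) = 4"
  by (simp add: table_entry_code_def)

lemma length_concat_table_entry_code: "length (concat (map table_entry_code zs)) = 4 * length zs"
  by (induction zs) (auto simp: length_table_entry_code)

lemma length_prog: "length prog = 168 + 4 * length xs"
  unfolding prog_def table_code_def by (simp add: length_concat_table_entry_code)

lemma prog_nth_main: "pc < 167 \<Longrightarrow> prog ! pc = main max_code ! pc"
  by (simp add: prog_def nth_append)

lemma prog_table_code_nth:
  assumes "zs @ y # ys = xs" and "r < 4"
  shows "prog ! (167 + 4 * length zs + r) = table_entry_code y ! r"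
proof -
  have "4 * length zs + r < length table_code"
    using assms by (auto simp: table_code_def length_concat_table_entry_code)
  then have "prog ! (167 + 4 * length zs + r) = table_code ! (4 * length zs + r)"
    unfolding prog_def by (simp add: nth_append)
  moreover have "table_code = concat (map table_entry_code zs) @ table_entry_code y @
      concat (map table_entry_code ys)"
    using assms(1) unfolding table_code_def by auto
  then have "table_code ! (4 * length zs + r) = table_entry_code y ! r"
    using assms(2) by (simp add: nth_append length_concat_table_entry_code length_table_entry_code)
  ultimately show ?thesis by simp
qed

lemma prog_table_return: "prog ! (167 + 4 * length xs) = Jmp 57"
  unfolding prog_def table_code_def by (simp add: nth_append length_concat_table_entry_code)

lemma step_prog:
  "pc < length prog \<Longrightarrow> prog ! pc \<noteq> Halt \<Longrightarrow> step prog (pc, m) = exec_instr (prog ! pc) (pc, m)"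
  by (simp add: step_def halted_def)

lemma step_prog_main [simp]:
  "pc < 167 \<Longrightarrow> main max_code ! pc \<noteq> Halt \<Longrightarrow>
    step prog (pc, m) = exec_instr (main max_code ! pc) (pc, m)"
  by (simp add: step_prog prog_nth_main length_prog)

lemma setup_run:
  assumes "m 0 = k" and "1 \<le> k"
  shows "fst (run prog 43 (0, m)) = 43"
    and "let m' = snd (run prog 43 (0, m)) in
      m' 0 = 32 * k + 15 \<and> m' 1 = 1 \<and> m' 2 = 0 \<and> m' 3 = 32 * k \<and> m' 12 = 15 \<and> m' 13 = 0 \<and>
      m' 14 = 32 \<and> (\<forall>i<16. m' (32 * k + i) = m (i + 1)) \<and>
      (\<forall>a. 16 < a \<longrightarrow> (a < 32 * k \<or> 32 * k + 16 \<le> a) \<longrightarrow> m' a = m a)"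
  using assms apply (simp_all add: mult_2[symmetric])
  apply (intro conjI allI impI)
   apply (simp_all add: numeral_2_eq_2)
  apply arith
  done

lemma table_entry_run:
  assumes "zs @ y # ys = xs"
  shows "run prog 4 (167 + 4 * length zs, m) =
    (167 + 4 * length (zs @ [y]), m(12 := e y + m 4, 13 := e (f y), e y + m 4 := e (f y)))"
proof -
  have lp: "167 + 4 * length zs + r < length prog" if "r < 4" for r
    using that assms unfolding length_prog by auto
  have pn: "prog ! (167 + 4 * length zs + r) = table_entry_code y ! r" if "r < 4" for r
    using prog_table_code_nth[OF assms that] .
  show ?thesis
    using lp[of 0] lp[of 1] lp[of 2] lp[of 3] pn[of 0] pn[of 1] pn[of 2] pn[of 3]
    by (simp add: step_prog table_entry_code_def next_pc_def numeral_eq_Suc add.assoc)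
qed

lemma table_code_run:
  assumes "zs @ ys = xs" and "17 \<le> m 4"
  shows "\<exists>m'. run prog (4 * length ys) (167 + 4 * length zs, m) = (167 + 4 * length xs, m') \<and>
    m' 4 = m 4 \<and> (\<forall>a. 16 < a \<longrightarrow> a \<notin> (\<lambda>y. m 4 + e y) ` set ys \<longrightarrow> m' a = m a) \<and>
    (\<forall>y\<in>set ys. m' (m 4 + e y) = e (f y)) \<and> (\<forall>r\<le>16. r \<noteq> 12 \<longrightarrow> r \<noteq> 13 \<longrightarrow> m' r = m r)"
  using assms
proof (induction ys arbitrary: zs m)
  case Nil
  then show ?case by auto
next
  case (Cons y ys)
  define m1 where "m1 = m(12 := e y + m 4, 13 := e (f y), e y + m 4 := e (f y))"
  have m14: "17 \<le> m1 4" "m1 4 = m 4"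
    using Cons.prems(2) unfolding m1_def by auto
  obtain m' where m': "run prog (4 * length ys) (167 + 4 * length (zs @ [y]), m1) = (167 + 4 * length xs, m')"
    "m' 4 = m1 4" "\<forall>a. 16 < a \<longrightarrow> a \<notin> (\<lambda>y. m1 4 + e y) ` set ys \<longrightarrow> m' a = m1 a"
    "\<forall>y\<in>set ys. m' (m1 4 + e y) = e (f y)" "\<forall>r\<le>16. r \<noteq> 12 \<longrightarrow> r \<noteq> 13 \<longrightarrow> m' r = m1 r"
    using Cons.IH[of "zs @ [y]" m1] Cons.prems(1) m14 by auto
  show ?case
  proof (rule exI[of _ m'], intro conjI)
    show "run prog (4 * length (y # ys)) (167 + 4 * length zs, m) = (167 + 4 * length xs, m')"
      using table_entry_run[OF Cons.prems(1)] m'(1) run_add[of prog 4 "4 * length ys"]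
      unfolding m1_def by simp
    show "m' 4 = m 4" using m'(2) m14 by simp
    show "\<forall>a. 16 < a \<longrightarrow> a \<notin> (\<lambda>y. m 4 + e y) ` set (y # ys) \<longrightarrow> m' a = m a"
      using m'(3) m14 unfolding m1_def by (auto simp: add.commute)
    show "\<forall>y'\<in>set (y # ys). m' (m 4 + e y') = e (f y')"
    proof
      fix y' assume y': "y' \<in> set (y # ys)"
      show "m' (m 4 + e y') = e (f y')"
      proof (cases "y' \<in> set ys")
        case True
        then show ?thesis using m'(4) m14 by simp
      next
        case False
        then have "y' = y" using y' by simp
        moreover have "m 4 + e y \<notin> (\<lambda>y. m1 4 + e y) ` set ys"
          using False inj \<open>y' = y\<close> m14 by (auto simp: inj_eq)
        then have "m' (m 4 + e y) = m1 (m 4 + e y)"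
          using m'(3) Cons.prems(2) by auto
        ultimately show ?thesis
          unfolding m1_def by (simp add: add.commute)
      qed
    qed
    show "\<forall>r\<le>16. r \<noteq> 12 \<longrightarrow> r \<noteq> 13 \<longrightarrow> m' r = m r"
      using m'(5) Cons.prems(2) unfolding m1_def by auto
  qed
qed

end

section \<open>Correctness and running time\<close>

text \<open>Memory of a run on a nonempty word \<open>w\<close> of length \<open>n\<close>: registers 1--16 (1 holds the
  constant 1, 2 holds \<open>n\<close>, 3--8 the base addresses below, 9--11 loop counters, 12--16 scratch),
  followed by the first 16 input letters saved at \<open>stash_addr\<close>, the letter table, the codes of
  \<open>w\<close> and of \<open>map f w\<close>, the mirror radii of the \<open>n + 1\<close> cuts and the run lengths for the
  current period.  The first 16 input cells are shared with the registers; they are saved at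
  \<open>32 n\<close> (obtained by doubling, there is no multiplication), and \<open>n\<close> is recovered by counting
  up to \<open>32 n\<close> in steps of 32.\<close>

locale cube_machine_input = cube_machine +
  fixes w :: "'a list"
  assumes nonempty: "w \<noteq> []"
begin

abbreviation n :: nat where
  "n \<equiv> length w"

definition "stash_addr = 32 * n"
definition "table_addr = stash_addr + 16"
definition "word_addr = table_addr + max_code + 1"
definition "conj_addr = word_addr + n"
definition "radius_addr = conj_addr + n"
definition "run_addr = radius_addr + n + 1"
definition "input_mem = init_mem e w"

lemma length_pos: "1 \<le> n"
  using nonempty by (cases w) auto

lemma stash_addr_ge: "32 \<le> stash_addr"
  using length_pos unfolding stash_addr_def by simp

lemma input_mem_length: "input_mem 0 = n"
  unfolding input_mem_def init_mem_def by simp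

lemma input_mem_letter: "i < n \<Longrightarrow> input_mem (Suc i) = e (w ! i)"
  unfolding input_mem_def init_mem_def by simp

definition "stashed m \<longleftrightarrow> (\<forall>i<16. m (stash_addr + i) = input_mem (i + 1))"

definition "untouched m \<longleftrightarrow>
  (\<forall>a. 16 < a \<longrightarrow> (a < stash_addr \<or> stash_addr + 16 \<le> a) \<longrightarrow> m a = input_mem a)"

lemma stashed_upd [simp]: "r \<le> 16 \<Longrightarrow> stashed (m(r := v)) = stashed m"
  using length_pos unfolding stashed_def stash_addr_def by auto

lemma untouched_upd [simp]: "r \<le> 16 \<Longrightarrow> untouched (m(r := v)) = untouched m"
  unfolding untouched_def by auto

definition "counting m \<longleftrightarrow> m 1 = 1 \<and> m 3 = stash_addr \<and> m 14 = 32 \<and> m 13 = 32 * m 2 \<and>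
  m 2 \<le> n \<and> stashed m \<and> untouched m"

lemma setup_phase: "reaches_within prog (0, input_mem) 43 (\<lambda>c. fst c = 43 \<and> counting (snd c))"
proof (rule reaches_within_run)
  let ?m = "snd (run prog 43 (0, input_mem))"
  have "fst (run prog 43 (0, input_mem)) = 43"
    using setup_run(1)[of input_mem n, OF input_mem_length length_pos] .
  moreover have "?m 0 = 32 * n + 15 \<and> ?m 1 = 1 \<and> ?m 2 = 0 \<and> ?m 3 = 32 * n \<and> ?m 12 = 15 \<and>
    ?m 13 = 0 \<and> ?m 14 = 32 \<and> (\<forall>i<16. ?m (32 * n + i) = input_mem (i + 1)) \<and>
    (\<forall>a. 16 < a \<longrightarrow> (a < 32 * n \<or> 32 * n + 16 \<le> a) \<longrightarrow> ?m a = input_mem a)"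
    using setup_run(2)[of input_mem n, OF input_mem_length length_pos] unfolding Let_def .
  ultimately show "fst (run prog 43 (0, input_mem)) = 43 \<and> counting ?m"
    unfolding counting_def stashed_def untouched_def stash_addr_def by simp
qed

lemma count_phase:
  assumes "fst c = 43 \<and> counting (snd c)"
  shows "reaches_within prog c ((n + 1) * 5) (\<lambda>c. fst c = 48 \<and> counting (snd c) \<and> snd c 2 = n)"
proof (rule reaches_within_loop_bounded[where I=counting and \<mu>="\<lambda>m. n - m 2", OF assms])
  fix m assume I: "counting m"
  show "reaches_within prog (43, m) 5 (\<lambda>c. (fst c = 48 \<and> counting (snd c) \<and> snd c 2 = n) \<or>
    (fst c = 43 \<and> counting (snd c) \<and> n - snd c 2 < n - m 2))"
  proof (cases "m 2 = n")
    case True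
    show ?thesis
      apply (rule reaches_within_mono[OF reaches_within_run[where k=2]])
      using I True stash_addr_ge length_pos unfolding counting_def by (simp_all add: stash_addr_def)
  next
    case False
    show ?thesis
      apply (rule reaches_within_run)
      using I False stash_addr_ge length_pos unfolding counting_def
      by (simp add: stash_addr_def) linarith
  qed
qed simp

definition pointers_set :: "(nat \<Rightarrow> nat) \<Rightarrow> bool" where
  "pointers_set m \<longleftrightarrow> m 1 = 1 \<and> m 2 = n \<and> m 3 = stash_addr \<and> m 4 = table_addr \<and>
     m 5 = word_addr \<and> m 6 = conj_addr \<and> m 7 = radius_addr \<and> m 8 = run_addr"

definition "input_intact m \<longleftrightarrow> (\<forall>a. 16 < a \<longrightarrow> a < stash_addr \<longrightarrow> m a = input_mem a)"

definition "conj_table m \<longleftrightarrow> (\<forall>a. m (table_addr + e a) = e (f a))"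

definition words_copied :: "nat \<Rightarrow> (nat \<Rightarrow> nat) \<Rightarrow> bool" where
  "words_copied k m \<longleftrightarrow> (\<forall>j<k. m (word_addr + j) = e (w ! j) \<and> m (conj_addr + j) = e (f (w ! j)))"

definition "copying m \<longleftrightarrow> pointers_set m \<and> stashed m \<and> input_intact m \<and> conj_table m \<and>
  m 9 \<le> n \<and> words_copied (m 9) m"

lemma pointers_set_upd [simp]: "r = 0 \<or> 8 < r \<Longrightarrow> pointers_set (m(r := v)) = pointers_set m"
  unfolding pointers_set_def by auto

lemma input_intact_upd [simp]:
  assumes "r \<le> 16 \<or> stash_addr \<le> r"
  shows "input_intact (m(r := v)) = input_intact m"
proof -
  have "\<forall>a. 16 < a \<longrightarrow> a < stash_addr \<longrightarrow> a \<noteq> r"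
    using assms by (intro allI impI) linarith
  then show ?thesis
    unfolding input_intact_def by (simp only: fun_upd_apply) presburger
qed

lemma table_addr_gt [simp]: "r \<le> 16 \<Longrightarrow> r < table_addr"
  using stash_addr_ge unfolding table_addr_def by simp

lemma conj_table_upd [simp]: "r < table_addr \<Longrightarrow> conj_table (m(r := v)) = conj_table m"
  unfolding conj_table_def by auto

lemma table_built:
  assumes "pointers_set m" "stashed m" "input_intact m"
  obtains m' where "run prog (4 * length xs + 2) (167, m) = (58, m')" and "copying m'"
proof -
  have t4: "m 4 = table_addr" "17 \<le> table_addr"
    using assms stash_addr_ge unfolding pointers_set_def table_addr_def by auto
  obtain m2 where m2: "run prog (4 * length xs) (167 + 4 * length [], m) = (167 + 4 * length xs, m2)"
    "\<forall>a. 16 < a \<longrightarrow> a \<notin> (\<lambda>y. m 4 + e y) ` set xs \<longrightarrow> m2 a = m a"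
    "\<forall>y\<in>set xs. m2 (m 4 + e y) = e (f y)" "\<forall>r\<le>16. r \<noteq> 12 \<longrightarrow> r \<noteq> 13 \<longrightarrow> m2 r = m r"
    using table_code_run[of "[]" xs m] t4 by auto
  have outside: "a \<notin> (\<lambda>y. m 4 + e y) ` set xs" if "a < table_addr" for a
    using that t4 by auto
  have "pointers_set m2"
    using assms(1) m2(4) unfolding pointers_set_def by auto
  moreover have "stashed m2"
    using assms(2) m2(2) outside stash_addr_ge unfolding stashed_def table_addr_def by auto
  moreover have "input_intact m2"
    using assms(3) m2(2) outside unfolding input_intact_def table_addr_def by auto
  moreover have "conj_table m2"
    using m2(3) t4 fin unfolding conj_table_def by auto
  ultimately have "copying (m2(9 := 0))"
    using stash_addr_ge unfolding copying_def by (simp add: words_copied_def)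
  moreover have "run prog 2 (167 + 4 * length xs, m2) = (58, m2(9 := 0))"
    using length_prog by (simp add: step_prog prog_table_return)
  ultimately show ?thesis
    using m2(1) run_add[of prog "4 * length xs" 2] by (intro that[of "m2(9 := 0)"]) simp_all
qed

lemma tables_phase:
  assumes "fst c = 48 \<and> counting (snd c) \<and> snd c 2 = n"
  shows "reaches_within prog c (9 + (4 * length xs + 2)) (\<lambda>c. fst c = 58 \<and> copying (snd c))"
proof -
  obtain m where c: "c = (48, m)" and m: "counting m" "m 2 = n"
    using assms by (cases c) auto
  show ?thesis unfolding c
  proof (rule reaches_within_seq)
    show "reaches_within prog (48, m) 9
      (\<lambda>c. fst c = 167 \<and> pointers_set (snd c) \<and> stashed (snd c) \<and> input_intact (snd c))"
      apply (rule reaches_within_run)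
      using m unfolding counting_def pointers_set_def untouched_def input_intact_def
      by (simp add: table_addr_def word_addr_def conj_addr_def radius_addr_def run_addr_def)
  next
    fix c :: config
    assume c: "fst c = 167 \<and> pointers_set (snd c) \<and> stashed (snd c) \<and> input_intact (snd c)"
    then obtain m1 where c1: "c = (167, m1)"
      by (cases c) auto
    have "pointers_set m1" "stashed m1" "input_intact m1"
      using c unfolding c1 by simp_all
    then obtain m' where "run prog (4 * length xs + 2) c = (58, m')" "copying m'"
      unfolding c1 by (rule table_built)
    then show "reaches_within prog c (4 * length xs + 2) (\<lambda>c. fst c = 58 \<and> copying (snd c))"
      by (intro reaches_within_run) simp
  qed
qed

lemma layout_order:
  "32 \<le> stash_addr" "stash_addr + 16 = table_addr" "table_addr + max_code + 1 = word_addr"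
  "word_addr + n = conj_addr" "conj_addr + n = radius_addr" "radius_addr + n + 1 = run_addr"
  using stash_addr_ge
  by (simp_all add: table_addr_def word_addr_def conj_addr_def radius_addr_def run_addr_def)

lemma layout_simps [simp]:
  "r \<le> 16 \<Longrightarrow> r < stash_addr + j" "r \<le> 16 \<Longrightarrow> r < stash_addr"
  "r \<le> 16 \<Longrightarrow> (stash_addr + j = r) = False" "r \<le> 16 \<Longrightarrow> (r = stash_addr + j) = False"
  "r \<le> 16 \<Longrightarrow> (stash_addr = r) = False" "r \<le> 16 \<Longrightarrow> (r = stash_addr) = False"
  "stash_addr \<le> stash_addr + j"
  "r \<le> 16 \<Longrightarrow> r < table_addr + j" "r \<le> 16 \<Longrightarrow> r < table_addr"
  "r \<le> 16 \<Longrightarrow> (table_addr + j = r) = False" "r \<le> 16 \<Longrightarrow> (r = table_addr + j) = False"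
  "r \<le> 16 \<Longrightarrow> (table_addr = r) = False" "r \<le> 16 \<Longrightarrow> (r = table_addr) = False"
  "stash_addr \<le> table_addr + j" "table_addr \<le> table_addr + j"
  "r \<le> 16 \<Longrightarrow> r < word_addr + j" "r \<le> 16 \<Longrightarrow> r < word_addr"
  "r \<le> 16 \<Longrightarrow> (word_addr + j = r) = False" "r \<le> 16 \<Longrightarrow> (r = word_addr + j) = False"
  "r \<le> 16 \<Longrightarrow> (word_addr = r) = False" "r \<le> 16 \<Longrightarrow> (r = word_addr) = False"
  "stash_addr \<le> word_addr + j" "table_addr \<le> word_addr + j" "table_addr + max_code < word_addr + j"
  "r \<le> 16 \<Longrightarrow> r < conj_addr + j" "r \<le> 16 \<Longrightarrow> r < conj_addr"
  "r \<le> 16 \<Longrightarrow> (conj_addr + j = r) = False" "r \<le> 16 \<Longrightarrow> (r = conj_addr + j) = False"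
  "r \<le> 16 \<Longrightarrow> (conj_addr = r) = False" "r \<le> 16 \<Longrightarrow> (r = conj_addr) = False"
  "stash_addr \<le> conj_addr + j" "table_addr \<le> conj_addr + j" "table_addr + max_code < conj_addr + j"
  "r \<le> 16 \<Longrightarrow> r < radius_addr + j" "r \<le> 16 \<Longrightarrow> r < radius_addr"
  "r \<le> 16 \<Longrightarrow> (radius_addr + j = r) = False" "r \<le> 16 \<Longrightarrow> (r = radius_addr + j) = False"
  "r \<le> 16 \<Longrightarrow> (radius_addr = r) = False" "r \<le> 16 \<Longrightarrow> (r = radius_addr) = False"
  "stash_addr \<le> radius_addr + j" "table_addr \<le> radius_addr + j"
  "table_addr + max_code < radius_addr + j"
  "r \<le> 16 \<Longrightarrow> r < run_addr + j" "r \<le> 16 \<Longrightarrow> r < run_addr"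
  "r \<le> 16 \<Longrightarrow> (run_addr + j = r) = False" "r \<le> 16 \<Longrightarrow> (r = run_addr + j) = False"
  "r \<le> 16 \<Longrightarrow> (run_addr = r) = False" "r \<le> 16 \<Longrightarrow> (r = run_addr) = False"
  "stash_addr \<le> run_addr + j" "table_addr \<le> run_addr + j" "table_addr + max_code < run_addr + j"
  using layout_order by auto

lemma table_addr_neq [simp]:
  "(table_addr + e a = word_addr + j) = False" "(table_addr + e a = conj_addr + j) = False"
  "(table_addr + e a = radius_addr + j) = False" "(table_addr + e a = run_addr + j) = False"
  using code_le_max_code[of a] layout_order by auto

lemma word_addr_neq [simp]:
  "(word_addr = conj_addr) = False"
  "j < i \<Longrightarrow> i \<le> n \<Longrightarrow> (word_addr + j = conj_addr + i) = False"
  "i < n \<Longrightarrow> (conj_addr + j = word_addr + i) = False"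
  "j < i \<Longrightarrow> (word_addr + j = word_addr + i) = False"
  "j < i \<Longrightarrow> (conj_addr + j = conj_addr + i) = False"
  using layout_order length_pos by auto

lemma stashed_upd_table [simp]: "table_addr \<le> r \<Longrightarrow> stashed (m(r := v)) = stashed m"
  unfolding stashed_def table_addr_def by auto

lemma conj_table_upd_above [simp]:
  "table_addr + max_code < r \<Longrightarrow> conj_table (m(r := v)) = conj_table m"
  unfolding conj_table_def using code_le_max_code by (metis add_le_cancel_left fun_upd_other leD)

lemma words_copied_upd_reg [simp]: "r \<le> 16 \<Longrightarrow> words_copied k (m(r := v)) = words_copied k m"
  unfolding words_copied_def by simp

lemma words_copied_snoc:
  "words_copied i m \<Longrightarrow> M (word_addr + i) = e (w ! i) \<Longrightarrow> M (conj_addr + i) = e (f (w ! i)) \<Longrightarrow>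
    (\<forall>j<i. M (word_addr + j) = m (word_addr + j) \<and> M (conj_addr + j) = m (conj_addr + j)) \<Longrightarrow>
    words_copied (Suc i) M"
  unfolding words_copied_def by (auto simp: less_Suc_eq)

text \<open>Letter \<open>i\<close> is read from the stash if \<open>i < 16\<close> and from the input cell \<open>i + 1\<close> otherwise,
  hence the two cases with different step counts.\<close>

lemma copy_phase:
  assumes "fst c = 58 \<and> copying (snd c)"
  shows "reaches_within prog c ((n + 1) * 16) (\<lambda>c. fst c = 75 \<and> copying (snd c) \<and> snd c 9 = n)"
proof (rule reaches_within_loop_bounded[where I=copying and \<mu>="\<lambda>m. n - m 9", OF assms])
  fix m assume I: "copying m"
  have R: "m 1 = 1" "m 2 = n" "m 3 = stash_addr" "m 4 = table_addr" "m 5 = word_addr"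
    "m 6 = conj_addr" "m 7 = radius_addr" "m 8 = run_addr"
    using I unfolding copying_def pointers_set_def by auto
  have S: "pointers_set m" "stashed m" "input_intact m" "conj_table m" "m 9 \<le> n" "words_copied (m 9) m"
    using I unfolding copying_def by auto
  show "reaches_within prog (58, m) 16 (\<lambda>c. (fst c = 75 \<and> copying (snd c) \<and> snd c 9 = n) \<or>
    (fst c = 58 \<and> copying (snd c) \<and> n - snd c 9 < n - m 9))"
  proof (cases "m 9 = n")
    case True
    show ?thesis
      apply (rule reaches_within_mono[OF reaches_within_run[where k=2]])
      using I True R unfolding copying_def by simp_all
  next
    case False
    define i where "i = m 9"
    have i: "i < n" using False S(5) i_def by simp
    have v: "m (table_addr + e (w ! i)) = e (f (w ! i))"
      using S(4) unfolding conj_table_def by simp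
    show ?thesis
    proof (cases "i < 16")
      case True
      have src: "m (stash_addr + i) = e (w ! i)"
        using S(2) True i input_mem_letter unfolding stashed_def by simp
      define M where "M = snd (run prog 16 (58, m))"
      have F: "fst (run prog 16 (58, m)) = 58"
        using R S src v i True unfolding i_def by simp
      have M: "M 9 = Suc i" "pointers_set M" "stashed M" "input_intact M" "conj_table M"
        "M (word_addr + i) = e (w ! i)" "M (conj_addr + i) = e (f (w ! i))"
        using R S src v i True unfolding i_def M_def by simp_all
      have "\<forall>j<i. M (word_addr + j) = m (word_addr + j) \<and> M (conj_addr + j) = m (conj_addr + j)"
        using R S src v i True unfolding i_def M_def by simp
      then have "copying M"
        unfolding copying_def using M words_copied_snoc[of i m M] S(6) i unfolding i_def by simp
      then show ?thesis
        using F M(1) i unfolding M_def i_def reaches_within_def by (intro exI[of _ 16]) simp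
    next
      case False
      have src: "m (Suc i) = e (w ! i)"
        using S(3) False i input_mem_letter layout_order
        unfolding input_intact_def stash_addr_def by auto
      define M where "M = snd (run prog 15 (58, m))"
      have F: "fst (run prog 15 (58, m)) = 58"
        using R S src v i False unfolding i_def by simp
      have M: "M 9 = Suc i" "pointers_set M" "stashed M" "input_intact M" "conj_table M"
        "M (word_addr + i) = e (w ! i)" "M (conj_addr + i) = e (f (w ! i))"
        using R S src v i False unfolding i_def M_def by simp_all
      have "\<forall>j<i. M (word_addr + j) = m (word_addr + j) \<and> M (conj_addr + j) = m (conj_addr + j)"
        using R S src v i False unfolding i_def M_def by simp
      then have "copying M"
        unfolding copying_def using M words_copied_snoc[of i m M] S(6) i unfolding i_def by simp
      then show ?thesis
        using F M(1) i unfolding M_def i_def reaches_within_def by (intro exI[of _ 15]) simp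
    qed
  qed
qed simp

definition radii_stored :: "nat \<Rightarrow> (nat \<Rightarrow> nat) \<Rightarrow> bool" where
  "radii_stored k m \<longleftrightarrow> (\<forall>c<k. max_prefix (mirror_match f w c) (m (radius_addr + c)))"

definition "words_ready m \<longleftrightarrow> pointers_set m \<and> words_copied n m"

definition "computing_radii m \<longleftrightarrow> words_ready m \<and> m 9 \<le> n + 1 \<and> radii_stored (m 9) m"

definition "scanning_mirror c m \<longleftrightarrow> words_ready m \<and> m 9 = c \<and> c \<le> n \<and> radii_stored c m \<and>
  m 10 \<le> c \<and> (\<forall>s < m 10. mirror_match f w c s)"

lemma radii_stored_upd_reg [simp]: "r \<le> 16 \<Longrightarrow> radii_stored k (m(r := v)) = radii_stored k m"
  unfolding radii_stored_def by simp

lemma words_copied_upd_radius [simp]: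
  "radius_addr \<le> r \<Longrightarrow> k \<le> n \<Longrightarrow> words_copied k (m(r := v)) = words_copied k m"
  unfolding words_copied_def using layout_order by auto

lemma words_ready_upd_reg [simp]:
  "r = 0 \<or> (8 < r \<and> r \<le> 16) \<Longrightarrow> words_ready (m(r := v)) = words_ready m"
  unfolding words_ready_def by auto

lemma words_ready_upd_radius [simp]: "radius_addr \<le> r \<Longrightarrow> words_ready (m(r := v)) = words_ready m"
  unfolding words_ready_def using layout_order by auto

lemma radii_stored_snoc:
  "radii_stored c m \<Longrightarrow> max_prefix (mirror_match f w c) k \<Longrightarrow>
    radii_stored (Suc c) (m(radius_addr + c := k))"
  unfolding radii_stored_def by (auto simp: less_Suc_eq)

lemma words_readyD:
  "words_ready m \<Longrightarrow> m 1 = 1 \<and> m 2 = n \<and> m 3 = stash_addr \<and> m 4 = table_addr \<and>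
    m 5 = word_addr \<and> m 6 = conj_addr \<and> m 7 = radius_addr \<and> m 8 = run_addr"
  unfolding words_ready_def pointers_set_def by auto

lemma words_ready_letter:
  "words_ready m \<Longrightarrow> j < n \<Longrightarrow> m (word_addr + j) = e (w ! j) \<and> m (conj_addr + j) = e (f (w ! j))"
  unfolding words_ready_def words_copied_def by auto

lemma radius_phase:
  assumes "fst cf = 80 \<and> scanning_mirror c (snd cf)"
  shows "reaches_within prog cf ((n + 1) * 17) (\<lambda>cf. fst cf = 98 \<and> words_ready (snd cf) \<and>
    snd cf 9 = c \<and> radii_stored c (snd cf) \<and> max_prefix (mirror_match f w c) (snd cf 10))"
proof (rule reaches_within_loop_bounded[where I="scanning_mirror c" and \<mu>="\<lambda>m. c - m 10", OF assms])
  fix m assume I: "scanning_mirror c m"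
  have R: "m 1 = 1" "m 2 = n" "m 3 = stash_addr" "m 4 = table_addr" "m 5 = word_addr"
    "m 6 = conj_addr" "m 7 = radius_addr" "m 8 = run_addr"
    using I words_readyD unfolding scanning_mirror_def by auto
  have S: "words_ready m" "m 9 = c" "c \<le> n" "radii_stored c m" "m 10 \<le> c"
    "\<forall>s < m 10. mirror_match f w c s"
    using I unfolding scanning_mirror_def by auto
  define k where "k = m 10"
  show "reaches_within prog (80, m) 17 (\<lambda>cf. (fst cf = 98 \<and> words_ready (snd cf) \<and> snd cf 9 = c \<and>
      radii_stored c (snd cf) \<and> max_prefix (mirror_match f w c) (snd cf 10)) \<or>
    (fst cf = 80 \<and> scanning_mirror c (snd cf) \<and> c - snd cf 10 < c - m 10))"
  proof (cases "k = c")
    case True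
    show ?thesis
      apply (rule reaches_within_mono[OF reaches_within_run[where k=2]])
      using R S True unfolding k_def max_prefix_def mirror_match_def by simp_all
  next
    case kc: False
    show ?thesis
    proof (cases "c + k < n")
      case False
      show ?thesis
        apply (rule reaches_within_mono[OF reaches_within_run[where k=5]])
        using R S False kc unfolding k_def max_prefix_def mirror_match_def by simp_all
    next
      case True
      have ck: "k < c" using kc S(5) k_def by simp
      have a: "m (conj_addr + (c + k)) = e (f (w ! (c + k)))"
        using words_ready_letter[OF S(1) True] by simp
      define j where "j = c - Suc k"
      have jn: "j < n" using ck S(3) j_def by simp
      have b: "m (word_addr + j) = e (w ! j)" using words_ready_letter[OF S(1) jn] by simp
      have wj: "word_addr + c - Suc k = word_addr + j" "c - Suc k = j" using ck j_def by simp_all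
      show ?thesis
      proof (cases "w ! j = f (w ! (c + k))")
        case True
        have "mirror_match f w c k"
          unfolding mirror_match_def using True ck \<open>c + k < n\<close> j_def by (simp add: diff_diff_add)
        then have all: "\<forall>s<Suc (m 10). mirror_match f w c s"
          using S(6) by (auto simp: less_Suc_eq k_def)
        have jl: "j < c - m 10" using j_def ck k_def by simp
        show ?thesis
          apply (rule reaches_within_run)
          using R S True a b ck jn wj all jl \<open>c + k < n\<close> unfolding k_def scanning_mirror_def
          by (simp add: inj_eq[OF inj])
      next
        case False
        have "\<not> mirror_match f w c k"
          unfolding mirror_match_def using False ck \<open>c + k < n\<close> j_def by (simp add: diff_diff_add)
        then have ch: "max_prefix (mirror_match f w c) (m 10)"
          using S(6) unfolding max_prefix_def k_def by simp
        show ?thesis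
          apply (rule reaches_within_mono[OF reaches_within_run[where k=16]])
          using R S False a b ck jn wj ch \<open>c + k < n\<close> unfolding k_def
          by (simp_all add: inj_eq[OF inj])
      qed
    qed
  qed
qed (use assms in \<open>auto simp: scanning_mirror_def\<close>)

lemma radii_step:
  assumes I: "computing_radii m"
  shows "reaches_within prog (76, m) (3 + ((n + 1) * 17 + 4))
    (\<lambda>cf. (fst cf = 102 \<and> words_ready (snd cf) \<and> radii_stored (n + 1) (snd cf)) \<or>
      (fst cf = 76 \<and> computing_radii (snd cf) \<and> n + 1 - snd cf 9 < n + 1 - m 9))"
proof -
  have R: "m 1 = 1" "m 2 = n" "m 3 = stash_addr" "m 4 = table_addr" "m 5 = word_addr"
    "m 6 = conj_addr" "m 7 = radius_addr" "m 8 = run_addr"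
    using I words_readyD unfolding computing_radii_def by auto
  have S: "words_ready m" "m 9 \<le> n + 1" "radii_stored (m 9) m"
    using I unfolding computing_radii_def by auto
  define c where "c = m 9"
  show ?thesis
  proof (cases "c = n + 1")
    case True
    show ?thesis
      apply (rule reaches_within_mono[OF reaches_within_run[where k=3]])
      using R S True unfolding c_def by simp_all
  next
    case False
    then have cn: "c \<le> n" using S(2) c_def by simp
    have start: "reaches_within prog (76, m) 3 (\<lambda>cf. fst cf = 80 \<and> scanning_mirror c (snd cf))"
      apply (rule reaches_within_run)
      using R S cn unfolding c_def scanning_mirror_def by simp
    have store: "reaches_within prog cf 4
        (\<lambda>cf. fst cf = 76 \<and> computing_radii (snd cf) \<and> snd cf 9 = Suc c)"
      if cf: "fst cf = 98 \<and> words_ready (snd cf) \<and> snd cf 9 = c \<and> radii_stored c (snd cf) \<and>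
        max_prefix (mirror_match f w c) (snd cf 10)" for cf
    proof -
      obtain m2 where m2: "cf = (98, m2)" "words_ready m2" "m2 9 = c" "radii_stored c m2"
        "max_prefix (mirror_match f w c) (m2 10)"
        using cf by (cases cf) auto
      have R2: "m2 7 = radius_addr" "m2 1 = 1" using words_readyD[OF m2(2)] by simp_all
      have "radii_stored (Suc c) (m2(12 := radius_addr + c, radius_addr + c := m2 10))"
        by (rule radii_stored_snoc) (use m2 in simp_all)
      then show ?thesis
        unfolding m2(1) using m2 R2 cn unfolding computing_radii_def
        by (intro reaches_within_run) simp
    qed
    have "reaches_within prog (76, m) (3 + ((n + 1) * 17 + 4))
        (\<lambda>cf. fst cf = 76 \<and> computing_radii (snd cf) \<and> snd cf 9 = Suc c)"
      apply (rule reaches_within_seq[OF start])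
      apply (rule reaches_within_seq[OF radius_phase], assumption)
      by (rule store)
    then show ?thesis
      by (rule reaches_within_post) (use cn in \<open>auto simp: c_def\<close>)
  qed
qed

lemma radii_phase:
  assumes "fst c = 75 \<and> copying (snd c) \<and> snd c 9 = n"
  shows "reaches_within prog c (1 + (n + 1 + 1) * (3 + ((n + 1) * 17 + 4)))
    (\<lambda>c. fst c = 102 \<and> words_ready (snd c) \<and> radii_stored (n + 1) (snd c))"
proof (rule reaches_within_seq)
  obtain m where "c = (75, m)" "copying m" "m 9 = n"
    using assms by (cases c) auto
  then show "reaches_within prog c 1 (\<lambda>c. fst c = 76 \<and> computing_radii (snd c))"
    by (intro reaches_within_run)
      (simp add: copying_def computing_radii_def words_ready_def radii_stored_def)
next
  fix c :: config assume "fst c = 76 \<and> computing_radii (snd c)"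
  moreover have "n + 1 - snd c 9 \<le> n + 1"
    by simp
  ultimately show "reaches_within prog c ((n + 1 + 1) * (3 + ((n + 1) * 17 + 4)))
    (\<lambda>c. fst c = 102 \<and> words_ready (snd c) \<and> radii_stored (n + 1) (snd c))"
    by (rule reaches_within_loop_bounded) (rule radii_step)
qed

text \<open>For the current period \<open>mm\<close> (register 11), \<open>m (run_addr + i)\<close> is the length of the
  maximal run of positions \<open>i, i + 1, \<dots>\<close> that agree with the positions \<open>mm\<close> further on; these
  are computed for \<open>i = n - 1, \<dots>, 0\<close>, each from its successor.  Periods are tried in
  increasing order, so all smaller ones are known to give no cube.\<close>

definition runs_stored :: "nat \<Rightarrow> nat \<Rightarrow> (nat \<Rightarrow> nat) \<Rightarrow> bool" where
  "runs_stored mm j m \<longleftrightarrow>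
     (\<forall>i. j \<le> i \<longrightarrow> i < n \<longrightarrow> max_prefix (shift_match w mm i) (m (run_addr + i)))"

definition period_ready :: "nat \<Rightarrow> (nat \<Rightarrow> nat) \<Rightarrow> bool" where
  "period_ready mm m \<longleftrightarrow> words_ready m \<and> radii_stored (n + 1) m \<and> m 11 = mm \<and> 1 \<le> mm \<and>
     3 * mm \<le> n \<and> (\<forall>mm' p. 1 \<le> mm' \<longrightarrow> mm' < mm \<longrightarrow> p + 3 * mm' \<le> n \<longrightarrow> \<not> cube_at f w p mm')"

definition "computing_runs mm m \<longleftrightarrow> period_ready mm m \<and> m 9 \<le> n \<and> runs_stored mm (m 9) m"

lemma period_ready_upd_reg [simp]:
  "r = 0 \<or> (8 < r \<and> r \<le> 16 \<and> r \<noteq> 11) \<Longrightarrow> period_ready mm (m(r := v)) = period_ready mm m"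
  unfolding period_ready_def by auto

lemma radii_stored_upd_run [simp]:
  "run_addr \<le> r \<Longrightarrow> radii_stored (Suc n) (m(r := v)) = radii_stored (Suc n) m"
  unfolding radii_stored_def using layout_order by auto

lemma period_ready_upd_run [simp]: "run_addr \<le> r \<Longrightarrow> period_ready mm (m(r := v)) = period_ready mm m"
  unfolding period_ready_def using layout_order by auto

lemma runs_stored_upd_reg [simp]: "r \<le> 16 \<Longrightarrow> runs_stored mm j (m(r := v)) = runs_stored mm j m"
  unfolding runs_stored_def by simp

lemma runs_stored_upd_reg2 [simp]:
  "r \<le> 16 \<Longrightarrow> r \<noteq> a \<Longrightarrow> runs_stored mm j (m(r := v, a := x)) = runs_stored mm j (m(a := x))"
  by (metis fun_upd_twist runs_stored_upd_reg)

lemma period_readyD: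
  "period_ready mm m \<Longrightarrow> m 1 = 1 \<and> m 2 = n \<and> m 3 = stash_addr \<and> m 4 = table_addr \<and>
    m 5 = word_addr \<and> m 6 = conj_addr \<and> m 7 = radius_addr \<and> m 8 = run_addr \<and> m 11 = mm \<and>
    1 \<le> mm \<and> 3 * mm \<le> n"
  unfolding period_ready_def using words_readyD by auto

lemma period_ready_letter: "period_ready mm m \<Longrightarrow> j < n \<Longrightarrow> m (word_addr + j) = e (w ! j)"
  unfolding period_ready_def using words_ready_letter by auto

lemma runs_stored_snoc:
  assumes "runs_stored mm (Suc i) m" and "max_prefix (shift_match w mm i) v"
  shows "runs_stored mm i (m(run_addr + i := v))"
  unfolding runs_stored_def
proof (intro allI impI)
  fix j assume j: "i \<le> j" "j < n"
  show "max_prefix (shift_match w mm j) ((m(run_addr + i := v)) (run_addr + j))"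
  proof (cases "j = i")
    case True
    then show ?thesis using assms(2) by simp
  next
    case False
    then have "Suc i \<le> j" using j by simp
    then show ?thesis using assms(1) j False unfolding runs_stored_def by simp
  qed
qed

lemma runs_phase:
  assumes "fst c = 110 \<and> computing_runs mm (snd c)"
  shows "reaches_within prog c ((n + 1) * 20)
    (\<lambda>cf. fst cf = 132 \<and> period_ready mm (snd cf) \<and> runs_stored mm 0 (snd cf))"
proof (rule reaches_within_loop_bounded[where I="computing_runs mm" and \<mu>="\<lambda>m. m 9", OF assms])
  fix m assume I: "computing_runs mm m"
  have R: "m 1 = 1" "m 2 = n" "m 3 = stash_addr" "m 4 = table_addr" "m 5 = word_addr"
    "m 6 = conj_addr" "m 7 = radius_addr" "m 8 = run_addr" "m 11 = mm" "1 \<le> mm" "3 * mm \<le> n"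
    using I period_readyD unfolding computing_runs_def by auto
  have S: "period_ready mm m" "m 9 \<le> n" "runs_stored mm (m 9) m"
    using I unfolding computing_runs_def by auto
  show "reaches_within prog (110, m) 20
    (\<lambda>cf. (fst cf = 132 \<and> period_ready mm (snd cf) \<and> runs_stored mm 0 (snd cf)) \<or>
      (fst cf = 110 \<and> computing_runs mm (snd cf) \<and> snd cf 9 < m 9))"
  proof (cases "m 9 = 0")
    case True
    show ?thesis
      apply (rule reaches_within_mono[OF reaches_within_run[where k=1]])
      using R S True by simp_all
  next
    case False
    define i where "i = m 9 - 1"
    have i: "m 9 = Suc i" "i < n" using False S(2) i_def by auto
    show ?thesis
    proof (cases "i + mm < n")
      case False
      then have "max_prefix (shift_match w mm i) 0"
        by (intro max_prefix_0) (simp add: shift_match_def)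
      then have rs: "runs_stored mm i (m(run_addr + i := 0))"
        by (rule runs_stored_snoc[rotated]) (use S(3) i in simp)
      show ?thesis
        apply (rule reaches_within_mono[OF reaches_within_run[where k=10]])
        using R S i False rs unfolding computing_runs_def by simp_all
    next
      case True
      have a: "m (word_addr + (i + mm)) = e (w ! (i + mm))" "m (word_addr + i) = e (w ! i)"
        using period_ready_letter[OF S(1)] True by auto
      show ?thesis
      proof (cases "w!i = w!(i+mm)")
        case False
        then have "max_prefix (shift_match w mm i) 0"
          by (intro max_prefix_0) (simp add: shift_match_def)
        then have rs: "runs_stored mm i (m(run_addr + i := 0))"
          by (rule runs_stored_snoc[rotated]) (use S(3) i in simp)
        show ?thesis
          apply (rule reaches_within_mono[OF reaches_within_run[where k=18]])
          using R S i False True a rs unfolding computing_runs_def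
          by (simp_all add: inj_eq[OF inj])
      next
        case eq: True
        have i1: "Suc i < n" using True R(10) by simp
        have "max_prefix (shift_match w mm (Suc i)) (m (run_addr + Suc i))"
          using S(3) i i1 unfolding runs_stored_def by (metis le_refl)
        moreover have "shift_match w mm (Suc i) = (\<lambda>s. shift_match w mm i (Suc s))"
          by (rule ext) (simp add: shift_match_def)
        ultimately have "max_prefix (shift_match w mm i) (Suc (m (run_addr + Suc i)))"
          using eq True by (intro max_prefix_Suc) (simp_all add: shift_match_def)
        then have "max_prefix (shift_match w mm i) (m (run_addr + Suc i) + 1)"
          by simp
        then have rs: "runs_stored mm i (m(run_addr + i := m (run_addr + Suc i) + 1))"
          by (rule runs_stored_snoc[rotated]) (use S(3) i in simp)
        show ?thesis
          apply (rule reaches_within_run)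
          using R S i eq True a rs unfolding computing_runs_def
          by (simp_all add: inj_eq[OF inj])
      qed
    qed
  qed
qed (use assms in \<open>simp add: computing_runs_def\<close>)

definition "has_cube \<longleftrightarrow> (\<exists>p mm. 1 \<le> mm \<and> p + 3 * mm \<le> n \<and> cube_at f w p mm)"

definition "first_pair_ok mm p \<longleftrightarrow>
  (\<forall>s<mm. shift_match w mm p s) \<or> (\<forall>s<mm. mirror_match f w (p + mm) s)"

definition "scanning mm m \<longleftrightarrow> period_ready mm m \<and> runs_stored mm 0 m \<and>
  (\<forall>p<m 9. p + 3 * mm \<le> n \<longrightarrow> \<not> cube_at f w p mm)"

lemma scanning_upd_reg [simp]:
  "8 < r \<Longrightarrow> r \<le> 16 \<Longrightarrow> r \<noteq> 11 \<Longrightarrow> r \<noteq> 9 \<Longrightarrow> scanning mm (m(r := v)) = scanning mm m"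
  unfolding scanning_def by simp

lemma period_ready_radius:
  "period_ready mm m \<Longrightarrow> c \<le> n \<Longrightarrow> max_prefix (mirror_match f w c) (m (radius_addr + c))"
  unfolding period_ready_def radii_stored_def by auto

lemma runs_stored_run:
  "runs_stored mm 0 m \<Longrightarrow> p < n \<Longrightarrow> max_prefix (shift_match w mm p) (m (run_addr + p))"
  unfolding runs_stored_def by auto

text \<open>Whether the first two blocks at \<open>p\<close> are related costs two table lookups: a run of
  length at least \<open>mm\<close> at \<open>p\<close>, or a radius of at least \<open>mm\<close> at the cut \<open>p + mm\<close>.\<close>

lemma scan_first_pair:
  assumes I: "scanning mm m" and pn: "m 9 + 3*mm \<le> n"
  shows "reaches_within prog (139, m) 12
    (\<lambda>cf. (fst cf = 149 \<and> scanning mm (snd cf) \<and> snd cf 9 = m 9 \<and> first_pair_ok mm (m 9)) \<or>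
      (fst cf = 133 \<and> scanning mm (snd cf) \<and> snd cf 9 = Suc (m 9)))"
proof -
  have S: "period_ready mm m" "runs_stored mm 0 m" "\<forall>p'<m 9. p' + 3 * mm \<le> n \<longrightarrow> \<not> cube_at f w p' mm"
    using I unfolding scanning_def by auto
  have R: "m 1 = 1" "m 2 = n" "m 3 = stash_addr" "m 4 = table_addr" "m 5 = word_addr"
    "m 6 = conj_addr" "m 7 = radius_addr" "m 8 = run_addr" "m 11 = mm" "1 \<le> mm" "3 * mm \<le> n"
    using period_readyD[OF S(1)] by auto
  define p where "p = m 9"
  have u: "mm \<le> m (run_addr + p) \<longleftrightarrow> (\<forall>s<mm. shift_match w mm p s)"
    using max_prefix_le_iff[OF runs_stored_run[OF S(2)]] pn R(10) p_def by simp
  have r: "mm \<le> m (radius_addr + (p + mm)) \<longleftrightarrow> (\<forall>s<mm. mirror_match f w (p + mm) s)"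
    using max_prefix_le_iff[OF period_ready_radius[OF S(1)]] pn p_def by simp
  show ?thesis
  proof (cases "mm \<le> m (run_addr + p)")
    case True
    show ?thesis
      apply (rule reaches_within_mono[OF reaches_within_run[where k=4]])
      using I R S True u unfolding p_def first_pair_ok_def by simp_all
  next
    case F1: False
    show ?thesis
    proof (cases "mm \<le> m (radius_addr + (p + mm))")
      case True
      show ?thesis
        apply (rule reaches_within_mono[OF reaches_within_run[where k=9]])
        using I R S True F1 r unfolding p_def first_pair_ok_def by simp_all
    next
      case False
      have "\<not> cube_at f w p mm"
        using F1 False u r unfolding cube_at_def by simp
      then have all: "\<forall>p'<Suc p. p' + 3 * mm \<le> n \<longrightarrow> \<not> cube_at f w p' mm"
        using S(3) p_def by (auto simp: less_Suc_eq)
      show ?thesis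
        apply (rule reaches_within_run)
        using R S False F1 all unfolding p_def scanning_def by simp_all
    qed
  qed
qed

lemma scan_second_pair:
  assumes I: "scanning mm m" and pn: "m 9 + 3*mm \<le> n" and C: "first_pair_ok mm (m 9)"
  shows "reaches_within prog (149, m) 12 (\<lambda>cf. (fst cf = 166 \<and> snd cf 0 = 1 \<and> has_cube) \<or>
    (fst cf = 133 \<and> scanning mm (snd cf) \<and> snd cf 9 = Suc (m 9)))"
proof -
  have S: "period_ready mm m" "runs_stored mm 0 m" "\<forall>p'<m 9. p' + 3 * mm \<le> n \<longrightarrow> \<not> cube_at f w p' mm"
    using I unfolding scanning_def by auto
  have R: "m 1 = 1" "m 2 = n" "m 3 = stash_addr" "m 4 = table_addr" "m 5 = word_addr"
    "m 6 = conj_addr" "m 7 = radius_addr" "m 8 = run_addr" "m 11 = mm" "1 \<le> mm" "3 * mm \<le> n"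
    using period_readyD[OF S(1)] by auto
  define p where "p = m 9"
  have u: "mm \<le> m (run_addr + (p + mm)) \<longleftrightarrow> (\<forall>s<mm. shift_match w mm (p + mm) s)"
    using max_prefix_le_iff[OF runs_stored_run[OF S(2)]] pn R(10) p_def by simp
  have r: "mm \<le> m (radius_addr + (p + mm + mm)) \<longleftrightarrow> (\<forall>s<mm. mirror_match f w (p + 2 * mm) s)"
    using max_prefix_le_iff[OF period_ready_radius[OF S(1), of "p + mm + mm"]] pn p_def
    by (simp add: mult_2 add.assoc)
  show ?thesis
  proof (cases "mm \<le> m (run_addr + (p + mm))")
    case True
    have "has_cube"
      unfolding has_cube_def cube_at_def using C True u R(10) pn unfolding p_def first_pair_ok_def
      by blast
    show ?thesis
      apply (rule reaches_within_mono[OF reaches_within_run[where k=7]])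
      using R S True \<open>has_cube\<close> unfolding p_def by simp_all
  next
    case F1: False
    show ?thesis
    proof (cases "mm \<le> m (radius_addr + (p + mm + mm))")
      case True
      have "has_cube"
        unfolding has_cube_def cube_at_def using C True r R(10) pn unfolding p_def first_pair_ok_def
        by blast
      show ?thesis
        apply (rule reaches_within_run)
        using R S True F1 \<open>has_cube\<close> unfolding p_def by simp_all
    next
      case False
      have "\<not> cube_at f w p mm"
        using F1 False u r unfolding cube_at_def by simp
      then have all: "\<forall>p'<Suc p. p' + 3 * mm \<le> n \<longrightarrow> \<not> cube_at f w p' mm"
        using S(3) p_def by (auto simp: less_Suc_eq)
      show ?thesis
        apply (rule reaches_within_run)
        using R S False F1 all unfolding p_def scanning_def by simp_all
    qed
  qed
qed

definition "scan_done mm cf \<longleftrightarrow>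
  (fst cf = 161 \<and> period_ready mm (snd cf) \<and> (\<forall>p. p + 3 * mm \<le> n \<longrightarrow> \<not> cube_at f w p mm)) \<or>
  (fst cf = 166 \<and> snd cf 0 = 1 \<and> has_cube)"

lemma scan_step:
  assumes I: "scanning mm m"
  shows "reaches_within prog (133, m) (5 + (12 + 12))
    (\<lambda>cf. scan_done mm cf \<or> (fst cf = 133 \<and> scanning mm (snd cf) \<and> n + 1 - snd cf 9 < n + 1 - m 9))"
proof -
  have S: "period_ready mm m" "runs_stored mm 0 m" "\<forall>p'<m 9. p' + 3 * mm \<le> n \<longrightarrow> \<not> cube_at f w p' mm"
    using I unfolding scanning_def by auto
  have R: "m 1 = 1" "m 2 = n" "m 3 = stash_addr" "m 4 = table_addr" "m 5 = word_addr"
    "m 6 = conj_addr" "m 7 = radius_addr" "m 8 = run_addr" "m 11 = mm" "1 \<le> mm" "3 * mm \<le> n"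
    using period_readyD[OF S(1)] by auto
  let ?Q = "\<lambda>cf. scan_done mm cf \<or> (fst cf = 133 \<and> scanning mm (snd cf) \<and> n + 1 - snd cf 9 < n + 1 - m 9)"
  show ?thesis
  proof (cases "m 9 + 3 * mm \<le> n")
    case False
    have all: "\<forall>p. p + 3 * mm \<le> n \<longrightarrow> \<not> cube_at f w p mm"
      using S(3) False by (meson add_le_mono1 leI order_trans)
    show ?thesis
      apply (rule reaches_within_mono[OF reaches_within_run[where k=6]])
      using R S False all unfolding scan_done_def by simp_all
  next
    case True
    show ?thesis
    proof (rule reaches_within_seq)
      show "reaches_within prog (133, m) 5 (\<lambda>cf. cf = (139, m(12 := 0)))"
        apply (rule reaches_within_run)
        using R True by simp
    next
      fix cf :: config assume cf: "cf = (139, m(12 := 0))"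
      have I': "scanning mm (m(12 := 0))" using I by simp
      have pn': "(m(12 := 0)) 9 + 3 * mm \<le> n" using True by simp
      show "reaches_within prog cf (12 + 12) ?Q"
        unfolding cf
      proof (rule reaches_within_seq[OF scan_first_pair[OF I' pn']])
        fix cf2 :: config
        assume cf2: "(fst cf2 = 149 \<and> scanning mm (snd cf2) \<and> snd cf2 9 = (m(12 := 0)) 9 \<and>
            first_pair_ok mm ((m(12 := 0)) 9)) \<or>
          (fst cf2 = 133 \<and> scanning mm (snd cf2) \<and> snd cf2 9 = Suc ((m(12 := 0)) 9))"
        show "reaches_within prog cf2 12 ?Q"
        proof (cases "fst cf2 = 149")
          case True
          obtain m2 where m2: "cf2 = (149, m2)" "scanning mm m2" "m2 9 = m 9" "first_pair_ok mm (m 9)"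
            using cf2 True by (cases cf2) auto
          show ?thesis unfolding m2(1)
            apply (rule reaches_within_post[OF scan_second_pair[OF m2(2)]])
            using \<open>m 9 + 3 * mm \<le> n\<close> m2 unfolding scan_done_def by auto
        next
          case False
          then have "fst cf2 = 133 \<and> scanning mm (snd cf2) \<and> snd cf2 9 = Suc (m 9)" using cf2 by auto
          moreover have "n - m 9 < Suc n - m 9" using True by (simp add: Suc_diff_le)
          ultimately show ?thesis by (intro reaches_within_refl) simp
        qed
      qed
    qed
  qed
qed

lemma scan_phase:
  assumes "fst c = 132 \<and> period_ready mm (snd c) \<and> runs_stored mm 0 (snd c)"
  shows "reaches_within prog c (1 + (n + 1 + 1) * (5 + (12 + 12))) (scan_done mm)"
proof (rule reaches_within_seq)
  obtain m where "c = (132, m)" "period_ready mm m" "runs_stored mm 0 m"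
    using assms by (cases c) auto
  then show "reaches_within prog c 1 (\<lambda>c. fst c = 133 \<and> scanning mm (snd c))"
    by (intro reaches_within_run) (simp add: scanning_def)
next
  fix c :: config assume "fst c = 133 \<and> scanning mm (snd c)"
  moreover have "n + 1 - snd c 9 \<le> n + 1"
    by simp
  ultimately show "reaches_within prog c ((n + 1 + 1) * (5 + (12 + 12))) (scan_done mm)"
    by (rule reaches_within_loop_bounded) (rule scan_step)
qed

definition "trying_period m \<longleftrightarrow> words_ready m \<and> radii_stored (n + 1) m \<and> 1 \<le> m 11 \<and>
  (\<forall>mm p. 1 \<le> mm \<longrightarrow> mm < m 11 \<longrightarrow> p + 3 * mm \<le> n \<longrightarrow> \<not> cube_at f w p mm)"

definition "answered cf \<longleftrightarrow> fst cf = 166 \<and> snd cf 0 = (if has_cube then 1 else 0)"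

lemma next_period:
  assumes "scan_done mm c"
  shows "reaches_within prog c 2
    (\<lambda>cf. answered cf \<or> (fst cf = 103 \<and> trying_period (snd cf) \<and> snd cf 11 = Suc mm))"
proof (cases "fst c = 166")
  case True
  then have "answered c"
    using assms unfolding scan_done_def answered_def by auto
  then show ?thesis
    by (intro reaches_within_refl) simp
next
  case False
  then obtain m where m: "c = (161, m)" "period_ready mm m"
    "\<forall>p. p + 3 * mm \<le> n \<longrightarrow> \<not> cube_at f w p mm"
    using assms unfolding scan_done_def by (cases c) auto
  have R: "m 1 = 1" "m 11 = mm" "words_ready m" "radii_stored (n + 1) m" "1 \<le> mm"
    using m(2) period_readyD unfolding period_ready_def by auto
  have "\<forall>mm' p. 1 \<le> mm' \<longrightarrow> mm' < Suc mm \<longrightarrow> p + 3 * mm' \<le> n \<longrightarrow> \<not> cube_at f w p mm'"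
    using m(2) m(3) unfolding period_ready_def by (metis less_SucE)
  then show ?thesis unfolding m(1)
    by (intro reaches_within_run) (use R in \<open>simp add: trying_period_def\<close>)
qed

lemma period_step:
  assumes I: "trying_period m"
  shows "reaches_within prog (103, m)
    (6 + ((n + 1) * 20 + ((1 + (n + 1 + 1) * (5 + (12 + 12))) + 2)))
    (\<lambda>cf. answered cf \<or> (fst cf = 103 \<and> trying_period (snd cf) \<and> n + 1 - snd cf 11 < n + 1 - m 11))"
proof -
  have S: "words_ready m" "radii_stored (n + 1) m" "1 \<le> m 11"
    "\<forall>mm' p. 1 \<le> mm' \<longrightarrow> mm' < m 11 \<longrightarrow> p + 3 * mm' \<le> n \<longrightarrow> \<not> cube_at f w p mm'"
    using I unfolding trying_period_def by auto
  have R: "m 1 = 1" "m 2 = n" "m 3 = stash_addr" "m 4 = table_addr" "m 5 = word_addr"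
    "m 6 = conj_addr" "m 7 = radius_addr" "m 8 = run_addr"
    using words_readyD[OF S(1)] by auto
  define mm where "mm = m 11"
  show ?thesis
  proof (cases "3 * mm \<le> n")
    case False
    have no_cube: "\<not> has_cube"
    proof
      assume has_cube
      then obtain p mm' where h: "1 \<le> mm'" "p + 3 * mm' \<le> n" "cube_at f w p mm'"
        unfolding has_cube_def by blast
      show False
      proof (cases "mm' < mm")
        case True
        then show False using S(4) h mm_def by blast
      next
        case False
        then show False using h \<open>\<not> 3 * mm \<le> n\<close> by linarith
      qed
    qed
    show ?thesis
      apply (rule reaches_within_mono[OF reaches_within_run[where k=6]])
      using R S False no_cube unfolding mm_def answered_def by simp_all
  next
    case True
    have "computing_runs mm (m(12 := 0, 9 := n))"
      unfolding computing_runs_def runs_stored_def period_ready_def using S True mm_def by simp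
    then have start: "reaches_within prog (103, m) 6 (\<lambda>cf. fst cf = 110 \<and> computing_runs mm (snd cf))"
      by (intro reaches_within_run) (use R True in \<open>simp add: mm_def\<close>)
    have "reaches_within prog (103, m)
      (6 + ((n + 1) * 20 + ((1 + (n + 1 + 1) * (5 + (12 + 12))) + 2)))
      (\<lambda>cf. answered cf \<or> (fst cf = 103 \<and> trying_period (snd cf) \<and> snd cf 11 = Suc mm))"
      apply (rule reaches_within_seq[OF start])
      apply (rule reaches_within_seq[OF runs_phase], assumption)
      apply (rule reaches_within_seq[OF scan_phase], assumption)
      by (rule next_period)
    then show ?thesis
      by (rule reaches_within_post) (use True S(3) in \<open>auto simp: mm_def\<close>)
  qed
qed

lemma period_phase:
  assumes "fst c = 102 \<and> words_ready (snd c) \<and> radii_stored (n + 1) (snd c)"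
  shows "reaches_within prog c
    (1 + (n + 1) * (6 + ((n + 1) * 20 + ((1 + (n + 1 + 1) * (5 + (12 + 12))) + 2)))) answered"
proof (rule reaches_within_seq)
  obtain m where "c = (102, m)" "words_ready m" "radii_stored (n + 1) m"
    using assms by (cases c) auto
  then show "reaches_within prog c 1 (\<lambda>c. fst c = 103 \<and> trying_period (snd c))"
    by (intro reaches_within_run) (simp add: trying_period_def)
next
  fix c :: config assume c: "fst c = 103 \<and> trying_period (snd c)"
  then have "1 \<le> snd c 11"
    unfolding trying_period_def by simp
  then have "n + 1 - snd c 11 \<le> n"
    by simp
  with c show "reaches_within prog c
      ((n + 1) * (6 + ((n + 1) * 20 + ((1 + (n + 1 + 1) * (5 + (12 + 12))) + 2)))) answered"
    by (rule reaches_within_loop_bounded) (rule period_step)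
qed

lemma has_cube_iff: "has_cube \<longleftrightarrow> contains_pseudo_cube (\<lambda>w. rev (map f w)) w"
  unfolding contains_pseudo_cube_iff_cube_at[OF invol] has_cube_def ..

lemma prog_answers:
  "reaches_within prog (0, input_mem) (66 * n\<^sup>2 + 215 * n + 212 + 4 * length xs) answered"
proof -
  have "reaches_within prog (0, input_mem)
    (43 + ((n + 1) * 5 + ((9 + (4 * length xs + 2)) + ((n + 1) * 16
      + ((1 + (n + 1 + 1) * (3 + ((n + 1) * 17 + 4)))
      + (1 + (n + 1) * (6 + ((n + 1) * 20 + ((1 + (n + 1 + 1) * (5 + (12 + 12))) + 2)))))))))
    answered"
    apply (rule reaches_within_seq[OF setup_phase])
    apply (rule reaches_within_seq[OF count_phase], assumption)
    apply (rule reaches_within_seq[OF tables_phase], assumption)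
    apply (rule reaches_within_seq[OF copy_phase], assumption)
    apply (rule reaches_within_seq[OF radii_phase], assumption)
    by (rule period_phase)
  then show ?thesis
    by (simp add: power2_eq_square algebra_simps)
qed

end

context cube_machine
begin

lemma prog_decides:
  "decides_in_time prog e (contains_pseudo_cube (\<lambda>w. rev (map f w)))
     (\<lambda>n. (500 + 4 * length xs) * n\<^sup>2 + (500 + 4 * length xs))"
  unfolding decides_in_time_def
proof
  fix w :: "'a list"
  have halt: "prog ! 166 = Halt" "166 < length prog"
    using prog_nth_main[of 166] by (simp_all add: length_prog)
  show "\<exists>k \<le> (500 + 4 * length xs) * (length w)\<^sup>2 + (500 + 4 * length xs).
    halted prog (run prog k (0, init_mem e w)) \<and>
    snd (run prog k (0, init_mem e w)) 0 =
      (if contains_pseudo_cube (\<lambda>w. rev (map f w)) w then 1 else 0)"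
  proof (cases "w = []")
    case True
    have "\<not> contains_pseudo_cube (\<lambda>w. rev (map f w)) []"
      unfolding contains_pseudo_cube_def is_factor_def pseudo_cube_def by auto
    then show ?thesis
      using True halt by (intro exI[of _ 1]) (simp add: init_mem_def halted_def)
  next
    case False
    then interpret cube_machine_input e f xs w
      by unfold_locales
    obtain k where k: "k \<le> 66 * n\<^sup>2 + 215 * n + 212 + 4 * length xs"
      and answered: "answered (run prog k (0, input_mem))"
      using prog_answers unfolding reaches_within_def by blast
    have "n \<le> n\<^sup>2"
      by (metis le_square power2_eq_square)
    then have "k \<le> (500 + 4 * length xs) * n\<^sup>2 + (500 + 4 * length xs)"
      using k by (simp add: algebra_simps)
    then show ?thesis
      using answered halt has_cube_iff
      unfolding answered_def halted_def input_mem_def by (intro exI[of _ k]) simp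
  qed
qed

end

theorem mainTheorem6:
  fixes \<phi> :: "('a::finite) list \<Rightarrow> 'a list"
    and e :: "'a \<Rightarrow> nat"
  assumes "antimorphic_involution \<phi>"
    and "inj e"
  shows "\<exists>P c. decides_in_time P e (contains_pseudo_cube \<phi>) (\<lambda>n. c * n ^ 2 + c)"
proof -
  obtain f where invol: "\<And>a. f (f a) = a" and \<phi>: "\<phi> = (\<lambda>w. rev (map f w))"
    using antimorphic_involution_letterwise[OF assms(1)] by blast
  obtain xs :: "'a list" where "set xs = UNIV"
    using finite_list[OF finite_UNIV] by blast
  then interpret cube_machine e f xs
    using assms(2) invol by unfold_locales
  show ?thesis
    using prog_decides unfolding \<phi> by blast
qed

end
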